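(* Let $X$ be a complex Banach space and let $\mathcal{D}=\{X_n:n\ge1\}$ be an $R$-Schauder decomposition of $X$. Then: (a) every sectorial operator $A$ on $X$ which is a $\mathcal{D}$-multiplier is $R$-sectorial of $R$-type $0$ (i.e. of $R$-type $\omega$ for every $\omega\in(0,\pi)$); (b) every Ritt operator $T\in B(X)$ which is a $\mathcal{D}$-multiplier is $R$-Ritt.
   Context: $R$-boundedness: with $(\varepsilon_j)$ independent Rademacher variables on $(\Omega,\mathbb{P})$ and $\|\sum_{j=1}^k\varepsilon_j\otimes x_j\|_{R,X}=\int_\Omega\|\sum_j\varepsilon_j(u)x_j\|\,d\mathbb{P}(u)$, a set $F\subset B(X)$ is $R$-bounded if there is $K$ with $\|\sum_j\varepsilon_j\otimes T_j x_j\|_{R,X}\le K\|\sum_j\varepsilon_j\otimes x_j\|_{R,X}$ for all finite families $T_j\in F$, $x_j\in X$. $\Sigma_\omega=\{\lambda\ne0:|\mathrm{Arg}\lambda|<\omega\}$. A closed densely defined $A$ is sectorial of type $\omega\in(0,\pi)$ if $\sigma(A)\subset\overline{\Sigma_\omega}$ and for each $\theta\in(\omega,\pi)$ the set $\{\lambda(\lambda I_X-A)^{-1}:\lambda\in\mathbb{C}\setminus\overline{\Sigma_\theta}\}$ is bounded; $R$-sectorial of $R$-type $\omega$ if moreover these sets are $R$-bounded; ($R$-)type $0$ means ($R$-)type $\omega$ for all $\omega\in(0,\pi)$. $T\in B(X)$ is a Ritt operator if $\{T^n:n\ge0\}$ and $\{nT^n(I_X-T):n\ge1\}$ are bounded,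 and $R$-Ritt if both sets are $R$-bounded. A Schauder decomposition of $X$ is a sequence $\mathcal{D}=\{X_n:n\ge1\}$ of closed subspaces such that every $x\in X$ has a unique expansion $x=\sum_{n\ge1}x_n$ with $x_n\in X_n$; $p_n(x)=x_n$ and $P_N=\sum_{n=1}^Np_n$ (the set $\{P_N:N\ge1\}$ is then bounded). $\mathcal{D}$ is $R$-Schauder if $\{P_N:N\ge1\}$ is $R$-bounded. A sectorial $\mathcal{D}$-multiplier is an operator $A$ of the form: for a nondecreasing sequence $(a_n)_{n\ge1}$ in $(0,\infty)$, $D(A)=\{x\in X:\sum_n a_np_n(x)\text{ converges}\}$ and $Ax=\sum_{n\ge1}a_np_n(x)$ (such $A$ is sectorial of type $0$). A Ritt $\mathcal{D}$-multiplier is an operator $T(x)=\sum_{n\ge1}c_np_n(x)$ with $(c_n)_{n\ge1}$ a nondecreasing sequence in $(0,1)$. *)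

theory Defs
  imports "HOL-Analysis.Analysis"
begin

text \<open>HOL-Analysis has no complex vector spaces; a complex Banach space is a real Banach
space with a compatible complex scalar multiplication.\<close>

class complex_banach = banach +
  fixes scaleC :: "complex \<Rightarrow> 'a \<Rightarrow> 'a" (infixr "*\<^sub>C" 75)
  assumes scaleC_add_right: "a *\<^sub>C (x + y) = a *\<^sub>C x + a *\<^sub>C y"
    and scaleC_add_left: "(a + b) *\<^sub>C x = a *\<^sub>C x + b *\<^sub>C x"
    and scaleC_scaleC: "a *\<^sub>C (b *\<^sub>C x) = (a * b) *\<^sub>C x"
    and scaleC_one: "1 *\<^sub>C x = x"
    and scaleR_scaleC: "r *\<^sub>R x = complex_of_real r *\<^sub>C x"
    and norm_scaleC: "norm (a *\<^sub>C x) = cmod a * norm x"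

definition clin_on :: "'a::complex_banach set \<Rightarrow> ('a \<Rightarrow> 'a) \<Rightarrow> bool" where
  "clin_on D T \<longleftrightarrow> (\<forall>x\<in>D. \<forall>y\<in>D. T (x + y) = T x + T y) \<and>
                    (\<forall>c. \<forall>x\<in>D. T (c *\<^sub>C x) = c *\<^sub>C T x)"

definition csubspace :: "'a::complex_banach set \<Rightarrow> bool" where
  "csubspace S \<longleftrightarrow> 0 \<in> S \<and> (\<forall>x\<in>S. \<forall>y\<in>S. x + y \<in> S) \<and> (\<forall>c. \<forall>x\<in>S. c *\<^sub>C x \<in> S)"

definition bop :: "('a::complex_banach \<Rightarrow> 'a) \<Rightarrow> bool" where
  "bop T \<longleftrightarrow> clin_on UNIV T \<and> (\<exists>K. \<forall>x. norm (T x) \<le> K * norm x)"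

definition op_bounded_set :: "('a::complex_banach \<Rightarrow> 'a) set \<Rightarrow> bool" where
  "op_bounded_set F \<longleftrightarrow> (\<exists>K. \<forall>S\<in>F. \<forall>x. norm (S x) \<le> K * norm x)"

text \<open>\<open>rad_norm x k\<close> = \<open>\<parallel>\<Sum>_{j<k} \<epsilon>_j \<otimes> x_j\<parallel>_{R,X}\<close>: the expectation over independent
Rademacher variables, i.e. the average over all sign vectors.\<close>
definition rad_norm :: "(nat \<Rightarrow> 'a::complex_banach) \<Rightarrow> nat \<Rightarrow> real" where
  "rad_norm x k = (\<Sum>s\<in>PiE {..<k} (\<lambda>_. {-1::real, 1}). norm (\<Sum>j<k. s j *\<^sub>R x j)) / 2 ^ k"

definition R_bounded :: "('a::complex_banach \<Rightarrow> 'a) set \<Rightarrow> bool" where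
  "R_bounded F \<longleftrightarrow> (\<exists>K. \<forall>k (T :: nat \<Rightarrow> 'a \<Rightarrow> 'a) x. (\<forall>j<k. T j \<in> F) \<longrightarrow>
        rad_norm (\<lambda>j. T j (x j)) k \<le> K * rad_norm x k)"

definition sector :: "real \<Rightarrow> complex set" where
  "sector \<omega> = {z. z \<noteq> 0 \<and> \<bar>Arg z\<bar> < \<omega>}"

text \<open>An (unbounded) operator is a pair of a domain \<open>D\<close> and a map \<open>A\<close> (relevant on \<open>D\<close>).
\<open>R\<close> is the resolvent \<open>(\<lambda>I - A)\<^sup>-\<^sup>1\<close> at \<open>\<lambda>\<close>.\<close>
definition is_resolvent :: "'a::complex_banach set \<Rightarrow> ('a \<Rightarrow> 'a) \<Rightarrow> complex \<Rightarrow> ('a \<Rightarrow> 'a) \<Rightarrow> bool" where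
  "is_resolvent D A z R \<longleftrightarrow> bop R \<and> (\<forall>x. R x \<in> D \<and> z *\<^sub>C R x - A (R x) = x)
      \<and> (\<forall>y\<in>D. R (z *\<^sub>C y - A y) = y)"

definition resolvent_set :: "'a::complex_banach set \<Rightarrow> ('a \<Rightarrow> 'a) \<Rightarrow> complex set" where
  "resolvent_set D A = {z. \<exists>R. is_resolvent D A z R}"

definition op_spectrum :: "'a::complex_banach set \<Rightarrow> ('a \<Rightarrow> 'a) \<Rightarrow> complex set" where
  "op_spectrum D A = - resolvent_set D A"

definition resolvent :: "'a::complex_banach set \<Rightarrow> ('a \<Rightarrow> 'a) \<Rightarrow> complex \<Rightarrow> 'a \<Rightarrow> 'a" where
  "resolvent D A z = (THE R. is_resolvent D A z R)"

definition closed_densely_defined :: "'a::complex_banach set \<Rightarrow> ('a \<Rightarrow> 'a) \<Rightarrow> bool" where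
  "closed_densely_defined D A \<longleftrightarrow> csubspace D \<and> clin_on D A \<and>
      closed {(x, A x) | x. x \<in> D} \<and> closure D = UNIV"

definition sectorial_type :: "'a::complex_banach set \<Rightarrow> ('a \<Rightarrow> 'a) \<Rightarrow> real \<Rightarrow> bool" where
  "sectorial_type D A \<omega> \<longleftrightarrow> closed_densely_defined D A \<and>
      op_spectrum D A \<subseteq> closure (sector \<omega>) \<and>
      (\<forall>\<theta>. \<omega> < \<theta> \<and> \<theta> < pi \<longrightarrow>
         op_bounded_set {(\<lambda>x. z *\<^sub>C resolvent D A z x) | z. z \<notin> closure (sector \<theta>)})"

definition R_sectorial_type :: "'a::complex_banach set \<Rightarrow> ('a \<Rightarrow> 'a) \<Rightarrow> real \<Rightarrow> bool" where
  "R_sectorial_type D A \<omega> \<longleftrightarrow> sectorial_type D A \<omega> \<and>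
      (\<forall>\<theta>. \<omega> < \<theta> \<and> \<theta> < pi \<longrightarrow>
         R_bounded {(\<lambda>x. z *\<^sub>C resolvent D A z x) | z. z \<notin> closure (sector \<theta>)})"

definition R_sectorial_type0 :: "'a::complex_banach set \<Rightarrow> ('a \<Rightarrow> 'a) \<Rightarrow> bool" where
  "R_sectorial_type0 D A \<longleftrightarrow> (\<forall>\<omega>. 0 < \<omega> \<and> \<omega> < pi \<longrightarrow> R_sectorial_type D A \<omega>)"

definition Ritt :: "('a::complex_banach \<Rightarrow> 'a) \<Rightarrow> bool" where
  "Ritt T \<longleftrightarrow> bop T \<and> op_bounded_set {T ^^ n | n. True} \<and>
      op_bounded_set {(\<lambda>x. of_nat n *\<^sub>R (T ^^ n) (x - T x)) | n. n \<ge> 1}"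

definition R_Ritt :: "('a::complex_banach \<Rightarrow> 'a) \<Rightarrow> bool" where
  "R_Ritt T \<longleftrightarrow> bop T \<and> R_bounded {T ^^ n | n. True} \<and>
      R_bounded {(\<lambda>x. of_nat n *\<^sub>R (T ^^ n) (x - T x)) | n. n \<ge> 1}"

text \<open>Subspaces indexed by \<open>n \<ge> 1\<close>; an expansion is a sequence \<open>y\<close> with \<open>y 0 = 0\<close>.\<close>
definition expansion :: "(nat \<Rightarrow> 'a::complex_banach set) \<Rightarrow> 'a \<Rightarrow> (nat \<Rightarrow> 'a) \<Rightarrow> bool" where
  "expansion Xs x y \<longleftrightarrow> y 0 = 0 \<and> (\<forall>n\<ge>1. y n \<in> Xs n) \<and>
      (\<lambda>N. \<Sum>n=1..N. y n) \<longlonglongrightarrow> x"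

definition schauder_decomp :: "(nat \<Rightarrow> 'a::complex_banach set) \<Rightarrow> bool" where
  "schauder_decomp Xs \<longleftrightarrow> (\<forall>n\<ge>1. closed (Xs n) \<and> csubspace (Xs n)) \<and>
      (\<forall>x. \<exists>!y. expansion Xs x y)"

definition sd_proj :: "(nat \<Rightarrow> 'a::complex_banach set) \<Rightarrow> nat \<Rightarrow> 'a \<Rightarrow> 'a" where
  "sd_proj Xs n x = (THE y. expansion Xs x y) n"

definition sd_partial :: "(nat \<Rightarrow> 'a::complex_banach set) \<Rightarrow> nat \<Rightarrow> 'a \<Rightarrow> 'a" where
  "sd_partial Xs N x = (\<Sum>n=1..N. sd_proj Xs n x)"

definition R_schauder_decomp :: "(nat \<Rightarrow> 'a::complex_banach set) \<Rightarrow> bool" where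
  "R_schauder_decomp Xs \<longleftrightarrow> schauder_decomp Xs \<and> R_bounded {sd_partial Xs N | N. N \<ge> 1}"

definition mult_dom :: "(nat \<Rightarrow> 'a::complex_banach set) \<Rightarrow> (nat \<Rightarrow> real) \<Rightarrow> 'a set" where
  "mult_dom Xs a = {x. convergent (\<lambda>N. \<Sum>n=1..N. a n *\<^sub>R sd_proj Xs n x)}"

definition mult_op :: "(nat \<Rightarrow> 'a::complex_banach set) \<Rightarrow> (nat \<Rightarrow> real) \<Rightarrow> 'a \<Rightarrow> 'a" where
  "mult_op Xs a x = lim (\<lambda>N. \<Sum>n=1..N. a n *\<^sub>R sd_proj Xs n x)"

end

theory Submission
  imports Defs
begin

text \<open>Let \<open>P N\<close> be the partial sum projections of the decomposition. Abel summation writes the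
  \<open>N\<close>-th partial sum of the multiplier with complex coefficients \<open>b n\<close> as
  \<open>\<Sum>n<N. (b n - b (n+1)) P n + b N P N\<close>. If the total variation and the supremum of \<open>b\<close> are at
  most \<open>C\<close>, the real and imaginary parts of this operator are \<open>2C\<close> times convex combinations of
  the operators \<open>\<plusminus>P N\<close>; since Rademacher averages are convex and invariant under sign changes,
  such convex combinations inherit the \<open>R\<close>-bound of \<open>{P N}\<close>. Hence a family of multipliers whose
  coefficient sequences have uniformly bounded variation is \<open>R\<close>-bounded.

  For a sectorial multiplier with nondecreasing \<open>a n > 0\<close>, \<open>z (z - A)\<^sup>-\<^sup>1\<close> is the multiplier with
  coefficients \<open>z / (z - a n)\<close>. Outside the closed sector of angle \<open>\<theta>\<close> one has
  \<open>\<bar>z - t\<bar> \<ge> sin (\<theta>/2) (\<bar>z\<bar> + t)\<close> for \<open>t \<ge> 0\<close>, which bounds the variation of these coefficients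
  by \<open>1 / sin (\<theta>/2)\<^sup>2\<close>, uniformly in \<open>z\<close>. For a Ritt multiplier with nondecreasing \<open>c n \<in> (0,1)\<close>,
  \<open>T\<^sup>k\<close> and \<open>k T\<^sup>k (I - T)\<close> are the multipliers with coefficients \<open>c n ^ k\<close> and
  \<open>k (c n) ^ k (1 - c n)\<close>, a monotone and a unimodal function of the increasing sequence \<open>c n\<close> with
  values in \<open>[0,1]\<close>; so their variations are at most 1 and 2.\<close>

context complex_banach begin

lemma scaleC_zero_right [simp]: "a *\<^sub>C 0 = 0"
proof -
  have "a *\<^sub>C (0 + 0) = a *\<^sub>C 0 + a *\<^sub>C 0" by (rule scaleC_add_right)
  then show ?thesis by simp
qed

lemma scaleC_zero_left [simp]: "0 *\<^sub>C x = 0"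
proof -
  have "(0 + 0) *\<^sub>C x = 0 *\<^sub>C x + 0 *\<^sub>C x" by (rule scaleC_add_left)
  then show ?thesis by simp
qed

lemma scaleC_minus_left: "(- a) *\<^sub>C x = - (a *\<^sub>C x)"
proof -
  have "(- a + a) *\<^sub>C x = (- a) *\<^sub>C x + a *\<^sub>C x" by (rule scaleC_add_left)
  then show ?thesis by (simp add: eq_neg_iff_add_eq_0)
qed

lemma scaleC_diff_left: "(a - b) *\<^sub>C x = a *\<^sub>C x - b *\<^sub>C x"
  using scaleC_add_left[of a "- b" x] by (simp add: scaleC_minus_left)

lemma scaleC_sum_right: "a *\<^sub>C (\<Sum>i\<in>A. f i) = (\<Sum>i\<in>A. a *\<^sub>C f i)"
  by (induction A rule: infinite_finite_induct) (auto simp: scaleC_add_right)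

lemma scaleC_scaleR: "a *\<^sub>C (r *\<^sub>R x) = r *\<^sub>R (a *\<^sub>C x)"
  by (simp add: scaleR_scaleC scaleC_scaleC mult.commute)

lemma scaleC_of_real: "complex_of_real r *\<^sub>C x = r *\<^sub>R x"
  by (simp add: scaleR_scaleC)

end

lemma bounded_bilinear_scaleC: "bounded_bilinear (\<lambda>(a::complex) (x::'a::complex_banach). a *\<^sub>C x)"
  by unfold_locales
    (auto simp: scaleC_add_left scaleC_add_right scaleC_scaleR scaleR_scaleC scaleC_scaleC
       scaleR_conv_of_real norm_scaleC mult.commute intro!: exI[of _ 1])

lemma tendsto_scaleC [tendsto_intros]:
  fixes g :: "_ \<Rightarrow> 'a::complex_banach"
  shows "(f \<longlongrightarrow> a) F \<Longrightarrow> (g \<longlongrightarrow> x) F \<Longrightarrow> ((\<lambda>i. f i *\<^sub>C g i) \<longlongrightarrow> a *\<^sub>C x) F"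
  using bounded_bilinear.tendsto[OF bounded_bilinear_scaleC] by blast

lemma bounded_linear_if_clin_on:
  fixes T :: "'a::complex_banach \<Rightarrow> 'a"
  assumes "clin_on UNIV T" "\<And>x. norm (T x) \<le> K * norm x"
  shows "bounded_linear T"
proof (rule bounded_linear_intro[where K=K])
  fix x y show "T (x + y) = T x + T y" using assms(1) by (simp add: clin_on_def)
next
  fix r x show "T (r *\<^sub>R x) = r *\<^sub>R T x" using assms(1) by (simp add: clin_on_def scaleR_scaleC)
next
  fix x show "norm (T x) \<le> norm x * K" using assms(2)[of x] by (simp add: mult.commute)
qed

lemma bop_scaleC:
  fixes T :: "'a::complex_banach \<Rightarrow> 'a"
  assumes "bop T"
  shows "bop (\<lambda>x. c *\<^sub>C T x)"
proof -
  obtain K where K: "\<And>x. norm (T x) \<le> K * norm x" and lin: "clin_on UNIV T"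
    using assms by (auto simp: bop_def)
  have "norm (c *\<^sub>C T x) \<le> (cmod c * K) * norm x" for x
    using K[of x] by (simp add: norm_scaleC mult.assoc mult_left_mono)
  moreover have "clin_on UNIV (\<lambda>x. c *\<^sub>C T x)"
    using lin by (simp add: clin_on_def scaleC_add_right scaleC_scaleC mult.commute)
  ultimately show ?thesis unfolding bop_def by blast
qed

section \<open>Rademacher averages\<close>

abbreviation sign_vectors :: "nat \<Rightarrow> (nat \<Rightarrow> real) set" where
  "sign_vectors k \<equiv> PiE {..<k} (\<lambda>_. {-1, 1})"

lemma rad_norm_nonneg: "0 \<le> rad_norm x k"
  unfolding rad_norm_def by (intro divide_nonneg_pos sum_nonneg) auto

lemma rad_norm_cong: "(\<And>j. j < k \<Longrightarrow> x j = y j) \<Longrightarrow> rad_norm x k = rad_norm y k"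
  unfolding rad_norm_def by (intro arg_cong2[where f="(/)"] sum.cong refl arg_cong[where f=norm]) auto

lemma rad_norm_add: "rad_norm (\<lambda>j. x j + y j) k \<le> rad_norm x k + rad_norm y k"
proof -
  have "(\<Sum>s\<in>sign_vectors k. norm (\<Sum>j<k. s j *\<^sub>R (x j + y j))) \<le>
        (\<Sum>s\<in>sign_vectors k. norm (\<Sum>j<k. s j *\<^sub>R x j) + norm (\<Sum>j<k. s j *\<^sub>R y j))"
    by (intro sum_mono) (simp add: scaleR_add_right sum.distrib norm_triangle_ineq)
  then show ?thesis
    unfolding rad_norm_def by (simp add: sum.distrib add_divide_distrib[symmetric] divide_right_mono)
qed

lemma rad_norm_scaleR: "rad_norm (\<lambda>j. c *\<^sub>R x j) k = \<bar>c\<bar> * rad_norm x k"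
proof -
  have "(\<Sum>j<k. s j *\<^sub>R c *\<^sub>R x j) = c *\<^sub>R (\<Sum>j<k. s j *\<^sub>R x j)" for s :: "nat \<Rightarrow> real"
    by (simp add: scaleR_sum_right mult.commute)
  then show ?thesis unfolding rad_norm_def by (simp add: sum_distrib_left)
qed

lemma rad_norm_scaleC_unit:
  fixes x :: "nat \<Rightarrow> 'a::complex_banach"
  assumes "cmod u = 1"
  shows "rad_norm (\<lambda>j. u *\<^sub>C x j) k = rad_norm x k"
proof -
  have "(\<Sum>j<k. s j *\<^sub>R (u *\<^sub>C x j)) = u *\<^sub>C (\<Sum>j<k. s j *\<^sub>R x j)" for s :: "nat \<Rightarrow> real"
    by (simp add: scaleC_sum_right scaleC_scaleR)
  then show ?thesis unfolding rad_norm_def by (simp add: norm_scaleC assms)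
qed

lemma rad_norm_signs:
  assumes "\<And>j. j < k \<Longrightarrow> \<sigma> j \<in> {-1, 1}"
  shows "rad_norm (\<lambda>j. \<sigma> j *\<^sub>R x j) k = rad_norm x k"
proof -
  define f where "f s = (\<lambda>j. if j < k then \<sigma> j * s j else undefined)" for s :: "nat \<Rightarrow> real"
  have "\<sigma> j * (\<sigma> j * s j) = s j" if "j < k" for j s
    using assms[OF that] by auto
  then have involution: "f (f s) = s" if "s \<in> sign_vectors k" for s
    using that by (auto simp: f_def PiE_def extensional_def fun_eq_iff)
  have closed: "f s \<in> sign_vectors k" if s: "s \<in> sign_vectors k" for s
  proof -
    have "\<sigma> j * s j \<in> {-1, 1}" if "j < k" for j
      using s assms[OF that] that by (auto simp: PiE_def)
    then show ?thesis by (auto simp: f_def PiE_def extensional_def)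
  qed
  have "(\<Sum>j<k. f s j *\<^sub>R x j) = (\<Sum>j<k. s j *\<^sub>R (\<sigma> j *\<^sub>R x j))" for s
    by (intro sum.cong refl) (simp add: f_def mult.commute)
  then have "(\<Sum>s\<in>sign_vectors k. norm (\<Sum>j<k. s j *\<^sub>R (\<sigma> j *\<^sub>R x j))) =
             (\<Sum>s\<in>sign_vectors k. norm (\<Sum>j<k. s j *\<^sub>R x j))"
    by (intro sum.reindex_bij_witness[where i=f and j=f]) (use involution closed in auto)
  then show ?thesis unfolding rad_norm_def by simp
qed

lemma rad_norm_one: "rad_norm x 1 = norm (x 0)"
proof -
  have "norm (\<Sum>j<1. s j *\<^sub>R x j) = norm (x 0)" if "s \<in> sign_vectors 1" for s
  proof -
    have "s 0 \<in> {-1, 1}" using that by (auto simp: PiE_def)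
    then show ?thesis by auto
  qed
  then have "(\<Sum>s\<in>sign_vectors 1. norm (\<Sum>j<1. s j *\<^sub>R x j)) = (\<Sum>s\<in>sign_vectors 1. norm (x 0))"
    by (rule sum.cong[OF refl])
  also have "\<dots> = 2 * norm (x 0)" by (simp add: card_PiE)
  finally show ?thesis unfolding rad_norm_def by simp
qed

lemma rad_norm_fun_upd_convex:
  assumes m: "m < k" and I: "finite I" and w: "\<And>i. i \<in> I \<Longrightarrow> 0 \<le> w i" and w1: "sum w I = 1"
  shows "rad_norm (x(m := \<Sum>i\<in>I. w i *\<^sub>R z i)) k \<le> (\<Sum>i\<in>I. w i * rad_norm (x(m := z i)) k)"
proof -
  define A where "A s = (\<Sum>j\<in>{..<k}-{m}. s j *\<^sub>R x j)" for s :: "nat \<Rightarrow> real"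
  have split: "(\<Sum>j<k. s j *\<^sub>R (x(m:=v)) j) = s m *\<^sub>R v + A s" for s v
  proof -
    have "(\<Sum>j<k. s j *\<^sub>R (x(m:=v)) j) = s m *\<^sub>R v + (\<Sum>j\<in>{..<k}-{m}. s j *\<^sub>R (x(m:=v)) j)"
      using m by (subst sum.remove[of _ m]) auto
    also have "(\<Sum>j\<in>{..<k}-{m}. s j *\<^sub>R (x(m:=v)) j) = A s"
      unfolding A_def by (intro sum.cong) auto
    finally show ?thesis .
  qed
  have pointwise: "norm (\<Sum>j<k. s j *\<^sub>R (x(m := \<Sum>i\<in>I. w i *\<^sub>R z i)) j)
        \<le> (\<Sum>i\<in>I. w i * norm (\<Sum>j<k. s j *\<^sub>R (x(m := z i)) j))" for s
  proof -
    have "(\<Sum>i\<in>I. w i *\<^sub>R A s) = A s"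
      by (simp only: scaleR_sum_left[symmetric] w1 scaleR_one)
    then have "s m *\<^sub>R (\<Sum>i\<in>I. w i *\<^sub>R z i) + A s = (\<Sum>i\<in>I. w i *\<^sub>R (s m *\<^sub>R z i + A s))"
      by (simp only: scaleR_add_right sum.distrib scaleR_sum_right scaleR_left_commute)
    then have "norm (s m *\<^sub>R (\<Sum>i\<in>I. w i *\<^sub>R z i) + A s) \<le> (\<Sum>i\<in>I. norm (w i *\<^sub>R (s m *\<^sub>R z i + A s)))"
      by (metis norm_sum)
    also have "\<dots> = (\<Sum>i\<in>I. w i * norm (s m *\<^sub>R z i + A s))"
      by (intro sum.cong refl) (simp add: w)
    finally show ?thesis by (simp only: split)
  qed
  have "(\<Sum>s\<in>sign_vectors k. norm (\<Sum>j<k. s j *\<^sub>R (x(m := \<Sum>i\<in>I. w i *\<^sub>R z i)) j))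
      \<le> (\<Sum>s\<in>sign_vectors k. \<Sum>i\<in>I. w i * norm (\<Sum>j<k. s j *\<^sub>R (x(m := z i)) j))"
    by (intro sum_mono pointwise)
  also have "\<dots> = (\<Sum>i\<in>I. w i * (\<Sum>s\<in>sign_vectors k. norm (\<Sum>j<k. s j *\<^sub>R (x(m := z i)) j)))"
    by (subst sum.swap) (simp add: sum_distrib_left)
  finally show ?thesis unfolding rad_norm_def times_divide_eq_right sum_divide_distrib[symmetric]
    by (intro divide_right_mono) auto
qed

lemma rad_norm_tendsto:
  assumes "\<And>j. j < k \<Longrightarrow> ((\<lambda>n. y n j) \<longlongrightarrow> x j) F"
  shows "((\<lambda>n. rad_norm (y n) k) \<longlongrightarrow> rad_norm x k) F"
  unfolding rad_norm_def using assms by (intro tendsto_intros) auto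

definition convex_combination_of :: "('a \<Rightarrow> 'b::real_vector) set \<Rightarrow> ('a \<Rightarrow> 'b) \<Rightarrow> bool" where
  "convex_combination_of G T \<longleftrightarrow> (\<exists>(I::nat set) w g. finite I \<and> (\<forall>i\<in>I. 0 \<le> w i \<and> g i \<in> G) \<and>
      sum w I = 1 \<and> (\<forall>v. T v = (\<Sum>i\<in>I. w i *\<^sub>R g i v)))"

lemma rad_norm_fun_upd_convex_combination_le:
  fixes G :: "('a::complex_banach \<Rightarrow> 'a) set"
  assumes "m < k" and "convex_combination_of G (T m)"
    and "\<And>g. g \<in> G \<Longrightarrow> rad_norm (\<lambda>j. (T(m := g)) j (x j)) k \<le> B"
  shows "rad_norm (\<lambda>j. T j (x j)) k \<le> B"
proof -
  obtain I :: "nat set" and w g where I: "finite I" and wg: "\<forall>i\<in>I. 0 \<le> w i \<and> g i \<in> G"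
    and w1: "sum w I = 1" and Tm: "\<forall>v. T m v = (\<Sum>i\<in>I. w i *\<^sub>R g i v)"
    using assms(2) unfolding convex_combination_of_def by blast
  have "(\<lambda>j. T j (x j)) = (\<lambda>j. T j (x j))(m := \<Sum>i\<in>I. w i *\<^sub>R g i (x m))"
    using Tm by (auto simp: fun_eq_iff)
  moreover have "(\<lambda>j. T j (x j))(m := g i (x m)) = (\<lambda>j. (T(m := g i)) j (x j))" for i
    by (auto simp: fun_eq_iff)
  ultimately have "rad_norm (\<lambda>j. T j (x j)) k \<le> (\<Sum>i\<in>I. w i * rad_norm (\<lambda>j. (T(m := g i)) j (x j)) k)"
    using rad_norm_fun_upd_convex[OF assms(1) I, of w "\<lambda>j. T j (x j)" "\<lambda>i. g i (x m)"] wg w1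
    by simp
  also have "\<dots> \<le> (\<Sum>i\<in>I. w i * B)"
    using wg assms(3) by (intro sum_mono mult_left_mono) auto
  also have "\<dots> = B" by (simp add: sum_distrib_right[symmetric] w1)
  finally show ?thesis .
qed

lemma rad_norm_convex_combinations_le:
  fixes G :: "('a::complex_banach \<Rightarrow> 'a) set"
  assumes G: "\<And>k T x. \<forall>j<k. T j \<in> G \<Longrightarrow> rad_norm (\<lambda>j. T j (x j)) k \<le> K * rad_norm x k"
    and T: "\<forall>j<k. convex_combination_of G (T j)"
  shows "rad_norm (\<lambda>j. T j (x j)) k \<le> K * rad_norm x k"
proof -
  \<comment> \<open>replace the first \<open>m\<close> operators by convex combinations, one at a time\<close>
  have "\<forall>T. (\<forall>j<k. (j < m \<longrightarrow> convex_combination_of G (T j)) \<and> (m \<le> j \<longrightarrow> T j \<in> G)) \<longrightarrow>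
          rad_norm (\<lambda>j. T j (x j)) k \<le> K * rad_norm x k" for m
  proof (induction m)
    case 0
    then show ?case using G by auto
  next
    case (Suc m)
    show ?case
    proof (intro allI impI)
      fix T assume T: "\<forall>j<k. (j < Suc m \<longrightarrow> convex_combination_of G (T j)) \<and> (Suc m \<le> j \<longrightarrow> T j \<in> G)"
      show "rad_norm (\<lambda>j. T j (x j)) k \<le> K * rad_norm x k"
      proof (cases "m < k")
        case True
        show ?thesis
        proof (rule rad_norm_fun_upd_convex_combination_le[where G=G and T=T and x=x, OF True])
          show "convex_combination_of G (T m)" using T True by auto
          fix g assume "g \<in> G"
          then have "\<forall>j<k. (j < m \<longrightarrow> convex_combination_of G ((T(m := g)) j)) \<and>
                            (m \<le> j \<longrightarrow> (T(m := g)) j \<in> G)"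
            using T by auto
          then show "rad_norm (\<lambda>j. (T(m := g)) j (x j)) k \<le> K * rad_norm x k"
            using Suc.IH by blast
        qed
      next
        case False
        then show ?thesis using T Suc.IH by auto
      qed
    qed
  qed
  from this[of k] T show ?thesis by auto
qed

locale R_schauder_decomposition =
  fixes Xs :: "nat \<Rightarrow> 'a::complex_banach set"
  assumes R_schauder: "R_schauder_decomp Xs"
begin

abbreviation "p \<equiv> sd_proj Xs"
abbreviation "P \<equiv> sd_partial Xs"

lemma schauder: "schauder_decomp Xs"
  using R_schauder by (simp add: R_schauder_decomp_def)

lemma csubspace_component: "n \<ge> 1 \<Longrightarrow> csubspace (Xs n)"
  using schauder by (simp add: schauder_decomp_def)

lemma expansion_proj: "expansion Xs x (\<lambda>n. p n x)"
proof -
  have "\<exists>!y. expansion Xs x y" using schauder by (simp add: schauder_decomp_def)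
  then show ?thesis unfolding sd_proj_def by (rule theI')
qed

lemma proj_eq_if_expansion: "expansion Xs x y \<Longrightarrow> p n x = y n"
proof -
  assume e: "expansion Xs x y"
  have "\<exists>!y. expansion Xs x y" using schauder by (simp add: schauder_decomp_def)
  then have "(THE y. expansion Xs x y) = y" using e by (metis the1_equality)
  then show ?thesis by (simp add: sd_proj_def)
qed

lemma proj_0 [simp]: "p 0 x = 0"
  using expansion_proj[of x] by (simp add: expansion_def)

lemma proj_in_component: "n \<ge> 1 \<Longrightarrow> p n x \<in> Xs n"
  using expansion_proj[of x] by (simp add: expansion_def)

lemma partial_tendsto: "(\<lambda>N. P N x) \<longlonglongrightarrow> x"
  using expansion_proj[of x] by (simp add: expansion_def sd_partial_def)

lemma partial_0 [simp]: "P 0 x = 0"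
  by (simp add: sd_partial_def)

lemma partial_Suc: "P (Suc N) x = P N x + p (Suc N) x"
  by (simp add: sd_partial_def)

lemma proj_add: "p n (x + y) = p n x + p n y"
proof (rule proj_eq_if_expansion)
  have "(\<lambda>N. P N x + P N y) \<longlonglongrightarrow> x + y" by (intro tendsto_intros partial_tendsto)
  then show "expansion Xs (x + y) (\<lambda>n. p n x + p n y)"
    using csubspace_component proj_in_component
    by (auto simp: expansion_def csubspace_def sd_partial_def sum.distrib)
qed

lemma proj_scaleC: "p n (c *\<^sub>C x) = c *\<^sub>C p n x"
proof (rule proj_eq_if_expansion)
  have "(\<lambda>N. c *\<^sub>C P N x) \<longlonglongrightarrow> c *\<^sub>C x" by (intro tendsto_intros partial_tendsto)
  then show "expansion Xs (c *\<^sub>C x) (\<lambda>n. c *\<^sub>C p n x)"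
    using csubspace_component proj_in_component
    by (auto simp: expansion_def csubspace_def sd_partial_def scaleC_sum_right)
qed

lemma proj_zero [simp]: "p n 0 = 0"
  using proj_scaleC[of n 0 0] by simp

lemma proj_proj: "p n (p m x) = (if n = m then p m x else 0)"
proof (cases "m = 0")
  case False
  have "eventually (\<lambda>N. (\<Sum>n = 1..N. if n = m then p m x else 0) = p m x) sequentially"
    using False by (auto simp: eventually_sequentially sum.delta)
  then have "(\<lambda>N. \<Sum>n = 1..N. if n = m then p m x else 0) \<longlonglongrightarrow> p m x"
    by (rule tendsto_eventually)
  then have "expansion Xs (p m x) (\<lambda>n. if n = m then p m x else 0)"
    using False csubspace_component proj_in_component by (auto simp: expansion_def csubspace_def)
  then show ?thesis by (rule proj_eq_if_expansion)
qed simp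

definition partial_R_bound :: real where
  "partial_R_bound = (SOME K. K \<ge> 0 \<and> (\<forall>k T x. (\<forall>j<k. T j \<in> {P N | N. N \<ge> 1}) \<longrightarrow>
      rad_norm (\<lambda>j. T j (x j)) k \<le> K * rad_norm x k))"

lemma partial_R_bound:
  shows partial_R_bound_nonneg: "partial_R_bound \<ge> 0"
    and rad_norm_partials_le: "\<And>k T x. \<forall>j<k. T j \<in> {P N | N. N \<ge> 1} \<Longrightarrow>
          rad_norm (\<lambda>j. T j (x j)) k \<le> partial_R_bound * rad_norm x k"
proof -
  obtain K where K: "\<And>k T x. \<forall>j<k. T j \<in> {P N | N. N \<ge> 1} \<Longrightarrow>
        rad_norm (\<lambda>j. T j (x j)) k \<le> K * rad_norm x k"
    using R_schauder unfolding R_schauder_decomp_def R_bounded_def by blast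
  have "\<exists>K. K \<ge> 0 \<and> (\<forall>k T x. (\<forall>j<k. T j \<in> {P N | N. N \<ge> 1}) \<longrightarrow>
      rad_norm (\<lambda>j. T j (x j)) k \<le> K * rad_norm x k)"
    by (intro exI[of _ "max K 0"] conjI allI impI order_trans[OF K] mult_right_mono rad_norm_nonneg)
      auto
  from someI_ex[OF this] show "partial_R_bound \<ge> 0"
    and "\<And>k T x. \<forall>j<k. T j \<in> {P N | N. N \<ge> 1} \<Longrightarrow>
          rad_norm (\<lambda>j. T j (x j)) k \<le> partial_R_bound * rad_norm x k"
    unfolding partial_R_bound_def[symmetric] by blast+
qed

lemma norm_partial_le: "norm (P N x) \<le> partial_R_bound * norm x"
proof (cases "N = 0")
  case False
  have "rad_norm (\<lambda>j. (\<lambda>_. P N) j ((\<lambda>_. x) j)) 1 \<le> partial_R_bound * rad_norm (\<lambda>_. x) 1"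
    by (rule rad_norm_partials_le) (use False in auto)
  then show ?thesis using rad_norm_one[of "\<lambda>_. x"] rad_norm_one[of "\<lambda>_. P N x"] by simp
qed (simp add: partial_R_bound_nonneg)

lemma norm_proj_le: "norm (p n x) \<le> 2 * partial_R_bound * norm x"
proof -
  have "p n x = P n x - P (n - 1) x"
    by (cases n) (simp_all add: partial_Suc)
  then have "norm (p n x) \<le> norm (P n x) + norm (P (n - 1) x)"
    by (simp add: norm_triangle_ineq4)
  also have "\<dots> \<le> partial_R_bound * norm x + partial_R_bound * norm x"
    by (intro add_mono norm_partial_le)
  finally show ?thesis by (simp add: algebra_simps)
qed

lemma bounded_linear_proj: "bounded_linear (p n)"
  by (rule bounded_linear_if_clin_on[OF _ norm_proj_le]) (simp add: clin_on_def proj_add proj_scaleC)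

lemma proj_tendsto: "(f \<longlongrightarrow> l) F \<Longrightarrow> ((\<lambda>i. p n (f i)) \<longlongrightarrow> p n l) F"
  by (rule bounded_linear.tendsto[OF bounded_linear_proj])

lemma proj_sum: "p n (sum f A) = (\<Sum>i\<in>A. p n (f i))"
  by (rule linear_sum[OF bounded_linear.linear[OF bounded_linear_proj]])

lemma proj_diff: "p n (x - y) = p n x - p n y"
  by (rule linear_diff[OF bounded_linear.linear[OF bounded_linear_proj]])

end

context R_schauder_decomposition begin

definition signed_partials :: "('a \<Rightarrow> 'a) set" where
  "signed_partials = {(\<lambda>v. \<sigma> *\<^sub>R P N v) | \<sigma> N. \<sigma> \<in> {-1, 1} \<and> N \<ge> 1}"

lemma rad_norm_signed_partials_le:
  assumes "\<forall>j<k. T j \<in> signed_partials"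
  shows "rad_norm (\<lambda>j. T j (x j)) k \<le> partial_R_bound * rad_norm x k"
proof -
  have "\<forall>j. \<exists>\<sigma> N. j < k \<longrightarrow> \<sigma> \<in> {-1, 1} \<and> N \<ge> 1 \<and> T j = (\<lambda>v. \<sigma> *\<^sub>R P N v)"
    using assms unfolding signed_partials_def by blast
  then obtain \<sigma> N where \<sigma>N: "\<And>j. j < k \<Longrightarrow> \<sigma> j \<in> {-1, 1} \<and> N j \<ge> 1 \<and> T j = (\<lambda>v. \<sigma> j *\<^sub>R P (N j) v)"
    by metis
  have "rad_norm (\<lambda>j. T j (x j)) k = rad_norm (\<lambda>j. \<sigma> j *\<^sub>R P (N j) (x j)) k"
    by (rule rad_norm_cong) (simp add: \<sigma>N)
  also have "\<dots> = rad_norm (\<lambda>j. P (N j) (x j)) k"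
    by (rule rad_norm_signs) (use \<sigma>N in auto)
  also have "\<dots> \<le> partial_R_bound * rad_norm x k"
    using rad_norm_partials_le[of k "\<lambda>j. P (N j)" x] \<sigma>N by auto
  finally show ?thesis .
qed

lemma convex_combination_of_signed_partials:
  assumes r: "(\<Sum>n=1..N. \<bar>r n\<bar>) \<le> 1"
  shows "convex_combination_of signed_partials (\<lambda>v. \<Sum>n=1..N. r n *\<^sub>R P n v)"
proof -
  \<comment> \<open>the weights \<open>\<bar>r n\<bar>\<close> on \<open>\<plusminus>P n\<close>, and the remaining mass split evenly between \<open>P 1\<close> and \<open>-P 1\<close>\<close>
  define s where "s = (\<Sum>n=1..N. \<bar>r n\<bar>)"
  define w where "w n = (if n \<in> {1..N} then \<bar>r n\<bar> else (1 - s) / 2)" for n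
  define \<sigma> where "\<sigma> n = (if n \<in> {1..N} then (if r n < 0 then -1 else 1) else if n = 0 then 1 else -1 :: real)" for n
  define g where "g n = (\<lambda>v. \<sigma> n *\<^sub>R P (if n \<in> {1..N} then n else 1) v)" for n
  have split: "(\<Sum>n=0..Suc N. f n) = f 0 + (\<Sum>n=1..N. f n) + f (Suc N)" for f :: "nat \<Rightarrow> 'b::comm_monoid_add"
    by (simp add: sum.atLeast0_atMost_Suc sum.atLeast_Suc_atMost)
  have "sum w {0..Suc N} = 1"
    unfolding split by (simp add: w_def s_def)
  moreover have "0 \<le> w n" for n
    using r by (simp add: w_def s_def)
  moreover have "g n \<in> signed_partials" for n
    unfolding signed_partials_def g_def
    by (intro CollectI exI[of _ "\<sigma> n"] exI[of _ "if n \<in> {1..N} then n else 1"]) (auto simp: \<sigma>_def)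
  moreover have "(\<Sum>n=1..N. r n *\<^sub>R P n v) = (\<Sum>n=0..Suc N. w n *\<^sub>R g n v)" for v
  proof -
    have "w n *\<^sub>R g n v = r n *\<^sub>R P n v" if "n \<in> {1..N}" for n
      using that by (cases "r n < 0") (simp_all add: w_def g_def \<sigma>_def)
    then have "(\<Sum>n=1..N. w n *\<^sub>R g n v) = (\<Sum>n=1..N. r n *\<^sub>R P n v)"
      by (auto intro!: sum.cong)
    moreover have "w 0 *\<^sub>R g 0 v + w (Suc N) *\<^sub>R g (Suc N) v = 0"
      by (simp add: w_def g_def \<sigma>_def)
    ultimately show ?thesis
      unfolding split by (simp add: algebra_simps)
  qed
  ultimately show ?thesis
    unfolding convex_combination_of_def by (intro exI[of _ "{0..Suc N}"] exI[of _ w] exI[of _ g]) auto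
qed

lemma rad_norm_real_partial_combinations_le:
  assumes "\<forall>j<k. (\<Sum>n=1..N. \<bar>r j n\<bar>) \<le> 1"
  shows "rad_norm (\<lambda>j. \<Sum>n=1..N. r j n *\<^sub>R P n (x j)) k \<le> partial_R_bound * rad_norm x k"
  using rad_norm_convex_combinations_le[of signed_partials partial_R_bound k
      "\<lambda>j v. \<Sum>n=1..N. r j n *\<^sub>R P n v"]
    rad_norm_signed_partials_le convex_combination_of_signed_partials assms
  by blast

lemma rad_norm_complex_partial_combinations_le:
  assumes C: "C > 0" and \<mu>: "\<forall>j<k. (\<Sum>n=1..N. cmod (\<mu> j n)) \<le> C"
  shows "rad_norm (\<lambda>j. \<Sum>n=1..N. \<mu> j n *\<^sub>C P n (x j)) k \<le> 2 * C * partial_R_bound * rad_norm x k"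
proof -
  define re where "re j n = Re (\<mu> j n) / C" for j n
  define im where "im j n = Im (\<mu> j n) / C" for j n
  let ?Re = "\<lambda>j. \<Sum>n=1..N. re j n *\<^sub>R P n (x j)" and ?Im = "\<lambda>j. \<Sum>n=1..N. im j n *\<^sub>R P n (x j)"
  have "\<mu> j n *\<^sub>C v = C *\<^sub>R (re j n *\<^sub>R v + \<i> *\<^sub>C (im j n *\<^sub>R v))" for j n and v :: 'a
  proof -
    have "\<mu> j n *\<^sub>C v = (complex_of_real (Re (\<mu> j n)) + \<i> * complex_of_real (Im (\<mu> j n))) *\<^sub>C v"
      by (simp add: complex_eq[symmetric])
    also have "\<dots> = Re (\<mu> j n) *\<^sub>R v + \<i> *\<^sub>C (Im (\<mu> j n) *\<^sub>R v)"
      by (simp add: scaleC_add_left scaleC_scaleC[symmetric] scaleC_of_real)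
    finally show ?thesis
      using C by (simp add: re_def im_def scaleR_add_right scaleC_scaleR[symmetric])
  qed
  then have split: "(\<lambda>j. \<Sum>n=1..N. \<mu> j n *\<^sub>C P n (x j)) = (\<lambda>j. C *\<^sub>R (?Re j + \<i> *\<^sub>C ?Im j))"
    by (simp add: scaleR_sum_right[symmetric] sum.distrib scaleC_sum_right)
  have "(\<Sum>n=1..N. \<bar>re j n\<bar>) \<le> 1 \<and> (\<Sum>n=1..N. \<bar>im j n\<bar>) \<le> 1" if "j < k" for j
  proof -
    have "(\<Sum>n=1..N. \<bar>re j n\<bar>) \<le> (\<Sum>n=1..N. cmod (\<mu> j n) / C)"
         "(\<Sum>n=1..N. \<bar>im j n\<bar>) \<le> (\<Sum>n=1..N. cmod (\<mu> j n) / C)"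
      using C by (auto intro!: sum_mono divide_right_mono simp: re_def im_def abs_Re_le_cmod abs_Im_le_cmod)
    moreover have "(\<Sum>n=1..N. cmod (\<mu> j n) / C) \<le> 1"
      using \<mu> that C by (simp add: sum_divide_distrib[symmetric])
    ultimately show ?thesis by linarith
  qed
  then have "rad_norm ?Re k \<le> partial_R_bound * rad_norm x k" "rad_norm ?Im k \<le> partial_R_bound * rad_norm x k"
    using rad_norm_real_partial_combinations_le[of k re] rad_norm_real_partial_combinations_le[of k im]
    by auto
  moreover have "rad_norm (\<lambda>j. C *\<^sub>R (?Re j + \<i> *\<^sub>C ?Im j)) k \<le> C * (rad_norm ?Re k + rad_norm ?Im k)"
    using C rad_norm_add[of ?Re "\<lambda>j. \<i> *\<^sub>C ?Im j" k]
    by (simp add: rad_norm_scaleR rad_norm_scaleC_unit)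
  ultimately have "rad_norm (\<lambda>j. C *\<^sub>R (?Re j + \<i> *\<^sub>C ?Im j)) k
      \<le> C * (partial_R_bound * rad_norm x k + partial_R_bound * rad_norm x k)"
    using C by (meson add_mono less_imp_le mult_left_mono order_trans)
  then show ?thesis
    unfolding split by (simp add: algebra_simps)
qed

end

section \<open>Multipliers with coefficients of bounded variation\<close>

definition bounded_variation :: "(nat \<Rightarrow> complex) \<Rightarrow> real \<Rightarrow> bool" where
  "bounded_variation b C \<longleftrightarrow> (\<forall>N. (\<Sum>n<N. cmod (b n - b (Suc n))) \<le> C) \<and> (\<forall>n. cmod (b n) \<le> C)"

lemma bounded_variation_of_real:
  assumes "\<And>N. (\<Sum>n<N. \<bar>f n - f (Suc n)\<bar>) \<le> C" "\<And>n. \<bar>f n\<bar> \<le> C"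
  shows "bounded_variation (\<lambda>n. complex_of_real (f n)) C"
  unfolding bounded_variation_def using assms by (simp add: of_real_diff[symmetric] del: of_real_diff)

lemma bounded_variation_incseq:
  assumes "\<And>n. f n \<le> f (Suc n)" "\<And>n. 0 \<le> f n \<and> f n \<le> C"
  shows "bounded_variation (\<lambda>n. complex_of_real (f n)) C"
proof (rule bounded_variation_of_real)
  fix N
  have "\<bar>f n - f (Suc n)\<bar> = f (Suc n) - f n" for n
    using assms(1)[of n] by simp
  then have "(\<Sum>n<N. \<bar>f n - f (Suc n)\<bar>) = (\<Sum>n<N. f (Suc n) - f n)"
    by simp
  also have "\<dots> = f N - f 0" by (rule sum_lessThan_telescope)
  finally show "(\<Sum>n<N. \<bar>f n - f (Suc n)\<bar>) \<le> C" using assms(2)[of N] assms(2)[of 0] by linarith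
qed (use assms(2) in auto)

context R_schauder_decomposition begin

definition cmult_partial :: "(nat \<Rightarrow> complex) \<Rightarrow> nat \<Rightarrow> 'a \<Rightarrow> 'a" where
  "cmult_partial b N x = (\<Sum>n=1..N. b n *\<^sub>C p n x)"

definition cmult :: "(nat \<Rightarrow> complex) \<Rightarrow> 'a \<Rightarrow> 'a" where
  "cmult b x = lim (\<lambda>N. cmult_partial b N x)"

lemma cmult_partial_cong: "(\<And>n. n \<ge> 1 \<Longrightarrow> b n = b' n) \<Longrightarrow> cmult_partial b N x = cmult_partial b' N x"
  unfolding cmult_partial_def by (intro sum.cong) auto

lemma cmult_cong:
  assumes "\<And>n. n \<ge> 1 \<Longrightarrow> b n = b' n"
  shows "cmult b x = cmult b' x"
proof -
  have "(\<lambda>N. cmult_partial b N x) = (\<lambda>N. cmult_partial b' N x)"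
    by (intro ext cmult_partial_cong assms)
  then show ?thesis by (simp add: cmult_def)
qed

lemma cmult_partial_one: "cmult_partial (\<lambda>_. 1) N x = P N x"
  by (simp add: cmult_partial_def sd_partial_def scaleC_one)

lemma cmult_partial_add: "cmult_partial b N (x + y) = cmult_partial b N x + cmult_partial b N y"
  by (simp add: cmult_partial_def proj_add scaleC_add_right sum.distrib)

lemma cmult_partial_scaleC: "cmult_partial b N (c *\<^sub>C x) = c *\<^sub>C cmult_partial b N x"
  by (simp add: cmult_partial_def proj_scaleC scaleC_scaleC scaleC_sum_right mult.commute)

lemma cmult_partial_diff_coeffs:
  "cmult_partial (\<lambda>n. b n - b' n) N x = cmult_partial b N x - cmult_partial b' N x"
  by (simp add: cmult_partial_def scaleC_diff_left sum_subtractf)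

lemma cmult_partial_mult_coeffs: "cmult_partial (\<lambda>n. c * b n) N x = c *\<^sub>C cmult_partial b N x"
  by (simp add: cmult_partial_def scaleC_scaleC scaleC_sum_right)

lemma cmult_partial_Abel:
  "cmult_partial b N x = (\<Sum>n<N. (b n - b (Suc n)) *\<^sub>C P n x) + b N *\<^sub>C P N x"
proof (induction N)
  case (Suc N)
  then show ?case
    by (simp add: cmult_partial_def partial_Suc scaleC_diff_left scaleC_add_right algebra_simps)
qed (simp add: cmult_partial_def)

lemma cmult_partial_Abel':
  "cmult_partial b N x = (\<Sum>n=1..N. (if n < N then b n - b (Suc n) else b N) *\<^sub>C P n x)"
proof -
  have shift: "(\<Sum>n<Suc N. f n) = f 0 + (\<Sum>n=1..N. f n)" for f :: "nat \<Rightarrow> 'a"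
    by (induction N) (simp_all add: add.assoc)
  show ?thesis
    unfolding cmult_partial_Abel using shift[of "\<lambda>n. (if n < N then b n - b (Suc n) else b N) *\<^sub>C P n x"]
    by simp
qed

lemma cmult_partial_tendsto:
  assumes "bounded_variation b C"
  shows "(\<lambda>N. cmult_partial b N x) \<longlonglongrightarrow> cmult b x"
proof -
  have var: "summable (\<lambda>n. cmod (b n - b (Suc n)))"
    using assms by (intro summableI_nonneg_bounded[where x=C]) (auto simp: bounded_variation_def)
  have "summable (\<lambda>n. (b n - b (Suc n)) *\<^sub>C P n x)"
  proof (rule summable_comparison_test'[where N=0])
    show "summable (\<lambda>n. cmod (b n - b (Suc n)) * (partial_R_bound * norm x))"
      by (intro summable_mult2 var)
    show "norm ((b n - b (Suc n)) *\<^sub>C P n x) \<le> cmod (b n - b (Suc n)) * (partial_R_bound * norm x)" for n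
      by (simp add: norm_scaleC mult_left_mono norm_partial_le)
  qed
  moreover have "summable (\<lambda>n. b n - b (Suc n))"
    by (rule summable_comparison_test'[OF var, of 0]) simp
  then have "(\<lambda>N. b 0 - (\<Sum>n<N. b n - b (Suc n))) \<longlonglongrightarrow> b 0 - suminf (\<lambda>n. b n - b (Suc n))"
    by (intro tendsto_intros summable_LIMSEQ)
  then have "b \<longlonglongrightarrow> b 0 - suminf (\<lambda>n. b n - b (Suc n))"
    by (simp add: sum_lessThan_telescope')
  ultimately have "(\<lambda>N. (\<Sum>n<N. (b n - b (Suc n)) *\<^sub>C P n x) + b N *\<^sub>C P N x) \<longlonglongrightarrow>
      suminf (\<lambda>n. (b n - b (Suc n)) *\<^sub>C P n x) + (b 0 - suminf (\<lambda>n. b n - b (Suc n))) *\<^sub>C x"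
    by (intro tendsto_intros summable_LIMSEQ partial_tendsto)
  then have "convergent (\<lambda>N. cmult_partial b N x)"
    unfolding cmult_partial_Abel by (rule convergentI)
  then show ?thesis by (simp add: cmult_def convergent_LIMSEQ_iff)
qed

lemma rad_norm_cmult_partial_le:
  assumes C: "C > 0" and b: "\<forall>j<k. bounded_variation (b j) C"
  shows "rad_norm (\<lambda>j. cmult_partial (b j) N (x j)) k \<le> 4 * C * partial_R_bound * rad_norm x k"
proof -
  define \<mu> where "\<mu> j n = (if n < N then b j n - b j (Suc n) else b j N)" for j n
  have "(\<Sum>n=1..N. cmod (\<mu> j n)) \<le> 2 * C" if "j < k" for j
  proof -
    have "(\<Sum>n=1..N. cmod (\<mu> j n)) \<le> (\<Sum>n<N. cmod (b j n - b j (Suc n))) + cmod (b j N)"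
    proof (cases N)
      case (Suc M)
      have "(\<Sum>n=1..N. cmod (\<mu> j n)) = (\<Sum>n=1..M. cmod (\<mu> j n)) + cmod (\<mu> j N)"
        using Suc by (simp add: sum.cl_ivl_Suc)
      also have "(\<Sum>n=1..M. cmod (\<mu> j n)) = (\<Sum>n=1..M. cmod (b j n - b j (Suc n)))"
        using Suc by (intro sum.cong) (auto simp: \<mu>_def)
      finally have "(\<Sum>n=1..N. cmod (\<mu> j n)) = (\<Sum>n=1..M. cmod (b j n - b j (Suc n))) + cmod (b j N)"
        by (simp add: \<mu>_def)
      moreover have "(\<Sum>n=1..M. cmod (b j n - b j (Suc n))) \<le> (\<Sum>n<N. cmod (b j n - b j (Suc n)))"
        using Suc by (intro sum_mono2) auto
      ultimately show ?thesis by linarith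
    qed simp
    also have "\<dots> \<le> C + C"
      using b that unfolding bounded_variation_def by (intro add_mono) auto
    finally show ?thesis by simp
  qed
  then have "rad_norm (\<lambda>j. \<Sum>n=1..N. \<mu> j n *\<^sub>C P n (x j)) k \<le> 2 * (2 * C) * partial_R_bound * rad_norm x k"
    using C by (intro rad_norm_complex_partial_combinations_le) auto
  then show ?thesis
    by (simp add: cmult_partial_Abel' \<mu>_def)
qed

lemma rad_norm_cmult_le:
  assumes C: "C > 0" and b: "\<forall>j<k. bounded_variation (b j) C"
  shows "rad_norm (\<lambda>j. cmult (b j) (x j)) k \<le> 4 * C * partial_R_bound * rad_norm x k"
proof -
  have "(\<lambda>N. rad_norm (\<lambda>j. cmult_partial (b j) N (x j)) k) \<longlonglongrightarrow> rad_norm (\<lambda>j. cmult (b j) (x j)) k"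
    by (rule rad_norm_tendsto) (use cmult_partial_tendsto b in auto)
  then show ?thesis
    by (rule LIMSEQ_le_const2) (use rad_norm_cmult_partial_le[OF C b] in auto)
qed

lemma norm_cmult_le:
  assumes "C > 0" and "bounded_variation b C"
  shows "norm (cmult b x) \<le> 4 * C * partial_R_bound * norm x"
  using rad_norm_cmult_le[OF assms(1), of 1 "\<lambda>_. b" "\<lambda>_. x"] assms(2)
    rad_norm_one[of "\<lambda>_. x"] rad_norm_one[of "\<lambda>_. cmult b x"] by simp

lemma R_bounded_cmult_family:
  assumes "C > 0"
    and "\<And>T. T \<in> F \<Longrightarrow> \<exists>b. bounded_variation b C \<and> T = cmult b"
  shows "R_bounded F"
  unfolding R_bounded_def
proof (intro exI allI impI)
  fix k :: nat and T :: "nat \<Rightarrow> 'a \<Rightarrow> 'a" and x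
  assume "\<forall>j<k. T j \<in> F"
  then have "\<forall>j. \<exists>b. j < k \<longrightarrow> bounded_variation b C \<and> T j = cmult b"
    using assms(2) by blast
  then obtain b where b: "\<And>j. j < k \<Longrightarrow> bounded_variation (b j) C \<and> T j = cmult (b j)"
    by metis
  have "rad_norm (\<lambda>j. T j (x j)) k = rad_norm (\<lambda>j. cmult (b j) (x j)) k"
    by (rule rad_norm_cong) (simp add: b)
  also have "\<dots> \<le> 4 * C * partial_R_bound * rad_norm x k"
    by (rule rad_norm_cmult_le[OF assms(1)]) (use b in auto)
  finally show "rad_norm (\<lambda>j. T j (x j)) k \<le> 4 * C * partial_R_bound * rad_norm x k" .
qed

lemma clin_on_cmult:
  assumes "bounded_variation b C"
  shows "clin_on UNIV (cmult b)"
proof -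
  note lim = cmult_partial_tendsto[OF assms]
  have "cmult b (x + y) = cmult b x + cmult b y" for x y
  proof -
    have "(\<lambda>N. cmult_partial b N (x + y)) \<longlonglongrightarrow> cmult b x + cmult b y"
      unfolding cmult_partial_add by (intro tendsto_intros lim)
    then show ?thesis using lim LIMSEQ_unique by blast
  qed
  moreover have "cmult b (c *\<^sub>C x) = c *\<^sub>C cmult b x" for c x
  proof -
    have "(\<lambda>N. cmult_partial b N (c *\<^sub>C x)) \<longlonglongrightarrow> c *\<^sub>C cmult b x"
      unfolding cmult_partial_scaleC by (intro tendsto_intros lim)
    then show ?thesis using lim LIMSEQ_unique by blast
  qed
  ultimately show ?thesis by (simp add: clin_on_def)
qed

lemma bop_cmult:
  assumes "C > 0" and "bounded_variation b C"
  shows "bop (cmult b)"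
  unfolding bop_def
  by (intro conjI clin_on_cmult[OF assms(2)] exI[of _ "4 * C * partial_R_bound"] allI norm_cmult_le[OF assms])

lemma bounded_linear_cmult:
  assumes "C > 0" and "bounded_variation b C"
  shows "bounded_linear (cmult b)"
  by (rule bounded_linear_if_clin_on[OF clin_on_cmult[OF assms(2)] norm_cmult_le[OF assms]])

lemma proj_of_limit:
  assumes n: "n \<ge> 1" and L: "(\<lambda>N. cmult_partial b N x) \<longlonglongrightarrow> L"
  shows "p n L = b n *\<^sub>C p n x"
proof -
  have "p n (cmult_partial b N x) = b n *\<^sub>C p n x" if "n \<le> N" for N
  proof -
    have "p n (cmult_partial b N x) = (\<Sum>m=1..N. if n = m then b n *\<^sub>C p n x else 0)"
      unfolding cmult_partial_def proj_sum proj_scaleC proj_proj by (intro sum.cong) auto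
    then show ?thesis using n that by simp
  qed
  then have "eventually (\<lambda>N. p n (cmult_partial b N x) = b n *\<^sub>C p n x) sequentially"
    by (auto simp: eventually_sequentially)
  then have "(\<lambda>N. p n (cmult_partial b N x)) \<longlonglongrightarrow> b n *\<^sub>C p n x"
    by (rule tendsto_eventually)
  moreover have "(\<lambda>N. p n (cmult_partial b N x)) \<longlonglongrightarrow> p n L"
    by (rule proj_tendsto[OF L])
  ultimately show ?thesis using LIMSEQ_unique by blast
qed

lemma cmult_partial_of_limit:
  assumes "(\<lambda>N. cmult_partial b N x) \<longlonglongrightarrow> L"
  shows "cmult_partial b' N L = cmult_partial (\<lambda>n. b' n * b n) N x"
  unfolding cmult_partial_def
  by (intro sum.cong refl) (simp add: proj_of_limit[OF _ assms] scaleC_scaleC)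

lemma cmult_one: "cmult (\<lambda>_. 1) x = x"
  unfolding cmult_def cmult_partial_one by (rule limI[OF partial_tendsto])

lemma cmult_cmult:
  assumes "bounded_variation b C"
  shows "cmult b' (cmult b x) = cmult (\<lambda>n. b' n * b n) x"
  unfolding cmult_def[of b'] cmult_def[of "\<lambda>n. b' n * b n"]
    cmult_partial_of_limit[OF cmult_partial_tendsto[OF assms]] ..

lemma cmult_scaled_diff:
  assumes "bounded_variation b C" "bounded_variation b' C'"
  shows "cmult (\<lambda>n. r * (b n - b' n)) x = r *\<^sub>C (cmult b x - cmult b' x)"
proof -
  have "(\<lambda>N. cmult_partial (\<lambda>n. r * (b n - b' n)) N x) \<longlonglongrightarrow> r *\<^sub>C (cmult b x - cmult b' x)"
    unfolding cmult_partial_mult_coeffs cmult_partial_diff_coeffs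
    by (intro tendsto_intros cmult_partial_tendsto[OF assms(1)] cmult_partial_tendsto[OF assms(2)])
  then show ?thesis by (simp add: cmult_def limI)
qed

lemma cmult_funpow:
  assumes "bounded_variation b C"
  shows "(cmult b ^^ k) x = cmult (\<lambda>n. b n ^ k) x"
proof (induction k arbitrary: x)
  case 0
  then show ?case by (simp add: cmult_one)
next
  case (Suc k)
  have "(cmult b ^^ Suc k) x = (cmult b ^^ k) (cmult b x)"
    by (simp add: funpow_Suc_right del: funpow.simps)
  also have "\<dots> = cmult (\<lambda>n. b n ^ k) (cmult b x)"
    by (rule Suc.IH)
  also have "\<dots> = cmult (\<lambda>n. b n ^ k * b n) x"
    by (rule cmult_cmult[OF assms])
  finally show ?case by (simp only: power_Suc2)
qed

end

section \<open>Ritt multipliers\<close>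

lemma variation_unimodal_le:
  fixes f :: "real \<Rightarrow> real" and t :: "nat \<Rightarrow> real"
  assumes mono_t: "\<And>n. t n \<le> t (Suc n)" and rng: "\<And>n. lo \<le> t n \<and> t n \<le> hi"
    and tm: "lo \<le> tm" "tm \<le> hi"
    and inc: "\<And>x y. lo \<le> x \<Longrightarrow> x \<le> y \<Longrightarrow> y \<le> tm \<Longrightarrow> f x \<le> f y"
    and dec: "\<And>x y. tm \<le> x \<Longrightarrow> x \<le> y \<Longrightarrow> y \<le> hi \<Longrightarrow> f y \<le> f x"
    and bnd: "\<And>x. lo \<le> x \<Longrightarrow> x \<le> hi \<Longrightarrow> 0 \<le> f x \<and> f x \<le> B"
  shows "(\<Sum>n<N. \<bar>f (t n) - f (t (Suc n))\<bar>) \<le> 2 * B"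
proof -
  \<comment> \<open>\<open>f = u - v\<close> with \<open>u\<close>, \<open>v\<close> nondecreasing and \<open>[0,B]\<close>-valued, so both variations telescope\<close>
  define u where "u x = f (min x tm)" for x
  define v where "v x = u x - f x" for x
  have um: "u x \<le> u y" if "lo \<le> x" "x \<le> y" "y \<le> hi" for x y
    unfolding u_def using that tm by (intro inc) auto
  have vm: "v x \<le> v y" if "lo \<le> x" "x \<le> y" "y \<le> hi" for x y
  proof (cases "y \<le> tm")
    case True then show ?thesis using that by (simp add: v_def u_def)
  next
    case False
    then have "f y \<le> f (max x tm)" using that tm by (intro dec) auto
    moreover have "f (min x tm) - f x \<le> f tm - f (max x tm)"
      using that tm by (cases "x \<le> tm") auto
    ultimately show ?thesis using False by (simp add: v_def u_def)
  qed
  have ub: "0 \<le> u x \<and> u x \<le> B" if "lo \<le> x" "x \<le> hi" for x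
    unfolding u_def using that tm by (intro bnd) auto
  have vb: "0 \<le> v x \<and> v x \<le> B" if "lo \<le> x" "x \<le> hi" for x
  proof (cases "x \<le> tm")
    case True then show ?thesis using bnd[of x] that by (simp add: v_def u_def)
  next
    case False
    then have "f x \<le> f tm" using that tm by (intro dec) auto
    then show ?thesis using False bnd[of x] bnd[of tm] that tm by (simp add: v_def u_def)
  qed
  have "(\<Sum>n<N. \<bar>f (t n) - f (t (Suc n))\<bar>) \<le> (\<Sum>n<N. (u (t (Suc n)) - u (t n)) + (v (t (Suc n)) - v (t n)))"
  proof (intro sum_mono)
    fix n
    have a: "u (t n) \<le> u (t (Suc n))" "v (t n) \<le> v (t (Suc n))"
      using rng[of n] rng[of "Suc n"] mono_t[of n] by (auto intro: um vm)
    have "f (t n) - f (t (Suc n)) = (u (t n) - u (t (Suc n))) - (v (t n) - v (t (Suc n)))"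
      by (simp add: v_def)
    then show "\<bar>f (t n) - f (t (Suc n))\<bar> \<le> (u (t (Suc n)) - u (t n)) + (v (t (Suc n)) - v (t n))"
      using a by linarith
  qed
  also have "\<dots> = (u (t N) - u (t 0)) + (v (t N) - v (t 0))"
    by (simp only: sum.distrib sum_lessThan_telescope[of "\<lambda>n. u (t n)"] sum_lessThan_telescope[of "\<lambda>n. v (t n)"])
  also have "\<dots> \<le> 2 * B" using ub[of "t N"] ub[of "t 0"] vb[of "t N"] vb[of "t 0"] rng[of N] rng[of 0] by linarith
  finally show ?thesis .
qed

lemma pow_times_one_minus_bounds:
  fixes x :: real assumes "0 \<le> x" "x \<le> 1"
  shows "0 \<le> real n * x ^ n * (1 - x) \<and> real n * x ^ n * (1 - x) \<le> 1"
proof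
  show "0 \<le> real n * x ^ n * (1 - x)" using assms by simp
  have "real n * x ^ n = (\<Sum>i<n. x ^ n)" by simp
  also have "\<dots> \<le> (\<Sum>i<n. x ^ i)" using assms by (intro sum_mono power_decreasing) auto
  finally have "real n * x ^ n * (1 - x) \<le> (\<Sum>i<n. x ^ i) * (1 - x)"
    using assms by (intro mult_right_mono) auto
  also have "\<dots> = 1 - x ^ n" by (simp add: one_diff_power_eq mult.commute)
  also have "\<dots> \<le> 1" using assms by simp
  finally show "real n * x ^ n * (1 - x) \<le> 1" .
qed

lemma pow_times_one_minus_has_derivative:
  assumes n: "n \<ge> 1"
  shows "((\<lambda>x::real. real n * x ^ n * (1 - x)) has_real_derivative
          (real n * x ^ (n - 1) * (real n - (real n + 1) * x))) (at x)"
proof -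
  have xn: "x ^ n = x * x ^ (n - 1)" using n by (metis One_nat_def Suc_pred not_one_le_zero power_Suc zero_less_iff_neq_zero)
  show ?thesis
    by (rule derivative_eq_intros refl | simp)+ (simp add: xn algebra_simps)
qed

lemma pow_times_one_minus_unimodal:
  assumes n: "n \<ge> 1"
  defines "g \<equiv> (\<lambda>x::real. real n * x ^ n * (1 - x))"
  shows "\<And>x y. 0 \<le> x \<Longrightarrow> x \<le> y \<Longrightarrow> y \<le> real n / (real n + 1) \<Longrightarrow> g x \<le> g y"
    and "\<And>x y. real n / (real n + 1) \<le> x \<Longrightarrow> x \<le> y \<Longrightarrow> y \<le> 1 \<Longrightarrow> g y \<le> g x"
proof -
  fix x y :: real
  assume xy: "0 \<le> x" "x \<le> y" "y \<le> real n / (real n + 1)"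
  show "g x \<le> g y" unfolding g_def
  proof (rule DERIV_nonneg_imp_nondecreasing[OF xy(2)])
    fix z assume z: "x \<le> z" "z \<le> y"
    have "y * (real n + 1) \<le> real n" using xy(3) by (simp add: field_simps)
    moreover have "z * (real n + 1) \<le> y * (real n + 1)" using z by (intro mult_right_mono) auto
    ultimately have "real n - (real n + 1) * z \<ge> 0" by (simp add: algebra_simps)
    moreover have "0 \<le> z" using z xy by linarith
    ultimately have "real n * z ^ (n - 1) * (real n - (real n + 1) * z) \<ge> 0" by simp
    then show "\<exists>d. ((\<lambda>x::real. real n * x ^ n * (1 - x)) has_real_derivative d) (at z) \<and> d \<ge> 0"
      using pow_times_one_minus_has_derivative[OF n, of z] by blast
  qed
next
  fix x y :: real
  assume xy: "real n / (real n + 1) \<le> x" "x \<le> y" "y \<le> 1"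
  show "g y \<le> g x" unfolding g_def
  proof (rule DERIV_nonpos_imp_nonincreasing[OF xy(2)])
    fix z assume z: "x \<le> z" "z \<le> y"
    have "real n \<le> x * (real n + 1)" using xy(1) by (simp add: field_simps)
    moreover have "x * (real n + 1) \<le> z * (real n + 1)" using z by (intro mult_right_mono) auto
    ultimately have "real n - (real n + 1) * z \<le> 0" by (simp add: algebra_simps)
    moreover have "0 \<le> z" using z xy order_trans[of 0 "real n / (real n + 1)"] by (auto intro: order_trans)
    ultimately have "real n * z ^ (n - 1) * (real n - (real n + 1) * z) \<le> 0"
      by (simp add: mult_nonneg_nonpos)
    then show "\<exists>d. ((\<lambda>x::real. real n * x ^ n * (1 - x)) has_real_derivative d) (at z) \<and> d \<le> 0"
      using pow_times_one_minus_has_derivative[OF n, of z] by blast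
  qed
qed

lemma bounded_variation_power:
  assumes "\<And>n. t n \<le> t (Suc n)" "\<And>n. 0 \<le> t n \<and> t n \<le> 1"
  shows "bounded_variation (\<lambda>n. complex_of_real (t n ^ k)) 1"
proof (rule bounded_variation_incseq)
  show "t n ^ k \<le> t (Suc n) ^ k" for n
    using assms by (intro power_mono) auto
  show "0 \<le> t n ^ k \<and> t n ^ k \<le> 1" for n
    using assms by (auto intro: power_le_one)
qed

lemma bounded_variation_Ritt_coeffs:
  assumes k: "k \<ge> 1" and "\<And>n. t n \<le> t (Suc n)" "\<And>n. 0 \<le> t n \<and> t n \<le> 1"
  shows "bounded_variation (\<lambda>n. complex_of_real (real k * t n ^ k * (1 - t n))) 2"
proof (rule bounded_variation_of_real)
  show "(\<Sum>n<N. \<bar>real k * t n ^ k * (1 - t n) - real k * t (Suc n) ^ k * (1 - t (Suc n))\<bar>) \<le> 2" for N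
    using variation_unimodal_le[where t=t and lo=0 and hi=1 and tm="real k / (real k + 1)"
        and f="\<lambda>x. real k * x ^ k * (1 - x)" and B=1 and N=N]
      assms pow_times_one_minus_bounds pow_times_one_minus_unimodal[OF k]
    by auto
  show "\<bar>real k * t n ^ k * (1 - t n)\<bar> \<le> 2" for n
    using pow_times_one_minus_bounds[of "t n" k] assms by auto
qed

context R_schauder_decomposition begin

lemma mult_op_eq_cmult:
  assumes "\<And>n. n \<ge> 1 \<Longrightarrow> a' n = a n"
  shows "mult_op Xs a = cmult (\<lambda>n. complex_of_real (a' n))"
proof
  fix x
  have "mult_op Xs a x = cmult (\<lambda>n. complex_of_real (a n)) x"
    by (simp add: mult_op_def cmult_def cmult_partial_def scaleC_of_real)
  also have "\<dots> = cmult (\<lambda>n. complex_of_real (a' n)) x"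
    by (rule cmult_cong) (simp add: assms)
  finally show "mult_op Xs a x = cmult (\<lambda>n. complex_of_real (a' n)) x" .
qed

lemma R_Ritt_mult_op:
  assumes c1: "\<forall>n\<ge>1. 0 < c n \<and> c n < 1" and c2: "\<forall>m n. 1 \<le> m \<and> m \<le> n \<longrightarrow> c m \<le> c n"
  shows "R_Ritt (mult_op Xs c)"
proof -
  \<comment> \<open>\<open>c 0\<close> is irrelevant; replace it by \<open>c 1\<close> to get a monotone sequence indexed from \<open>0\<close>\<close>
  define t where "t n = c (max n 1)" for n
  have t_mono: "t n \<le> t (Suc n)" and t_range: "0 \<le> t n \<and> t n \<le> 1" for n
    unfolding t_def using c1 c2 by (auto simp: less_imp_le)
  define b where "b k n = complex_of_real (t n ^ k)" for k n
  have bv_b: "bounded_variation (b k) 1" for k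
    unfolding b_def by (rule bounded_variation_power) (use t_mono t_range in auto)
  define T where "T = mult_op Xs c"
  have T: "T = cmult (b 1)"
    unfolding T_def b_def by (rule mult_op_eq_cmult) (simp add: t_def max_def)
  have power: "T ^^ k = cmult (b k)" for k
    unfolding T by (rule ext, subst cmult_funpow[OF bv_b]) (simp add: b_def[abs_def])
  have "R_bounded {T ^^ k | k. True}"
    by (rule R_bounded_cmult_family[of 1]) (use bv_b power in auto)
  moreover have "R_bounded {(\<lambda>x. of_nat k *\<^sub>R (T ^^ k) (x - T x)) | k. k \<ge> 1}"
  proof (rule R_bounded_cmult_family[of 2])
    fix F assume "F \<in> {(\<lambda>x. of_nat k *\<^sub>R (T ^^ k) (x - T x)) | k. k \<ge> 1}"
    then obtain k where k: "k \<ge> 1" and F: "F = (\<lambda>x. of_nat k *\<^sub>R (T ^^ k) (x - T x))"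
      by blast
    define g where "g n = complex_of_real (real k * t n ^ k * (1 - t n))" for n
    have "F x = cmult g x" for x
    proof -
      have "(T ^^ k) (T x) = cmult (b (Suc k)) x"
        using power[of "Suc k"] by (simp add: funpow_Suc_right fun_eq_iff del: funpow.simps)
      then have "F x = real k *\<^sub>R (cmult (b k) x - cmult (b (Suc k)) x)"
        using linear_diff[OF bounded_linear.linear[OF bounded_linear_cmult[OF _ bv_b]], of k x "T x"]
        by (simp add: F power)
      also have "\<dots> = cmult (\<lambda>n. complex_of_real (real k) * (b k n - b (Suc k) n)) x"
        by (simp only: cmult_scaled_diff[OF bv_b bv_b] scaleC_of_real)
      also have "\<dots> = cmult g x"
        by (simp add: g_def[abs_def] b_def algebra_simps)
      finally show ?thesis .
    qed
    moreover have "bounded_variation g 2"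
      unfolding g_def by (rule bounded_variation_Ritt_coeffs[OF k]) (use t_mono t_range in auto)
    ultimately show "\<exists>g. bounded_variation g 2 \<and> F = cmult g" by blast
  qed simp
  moreover have "bop T"
    unfolding T by (rule bop_cmult[OF _ bv_b]) simp
  ultimately show ?thesis
    by (simp add: R_Ritt_def T_def)
qed

end

section \<open>Sectorial multipliers\<close>

lemma zero_in_closure_sector:
  assumes "0 < \<theta>" shows "0 \<in> closure (sector \<theta>)"
  unfolding closure_approachable
proof (intro allI impI)
  fix e :: real assume e: "e > 0"
  have "Arg (complex_of_real (e/2)) = 0" using e by (simp only: Arg_of_real) simp
  then have "complex_of_real (e/2) \<in> sector \<theta>" using e assms unfolding sector_def by simp
  moreover have "dist (complex_of_real (e/2)) 0 < e" using e by simp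
  ultimately show "\<exists>y\<in>sector \<theta>. dist y 0 < e" by blast
qed

lemma cmod_mult_cos_Arg: "z \<noteq> 0 \<Longrightarrow> cmod z * cos (Arg z) = Re z"
  using Arg_eq [of z] by (metis Re_exp exp_Ln norm_exp_eq_Re Arg_def)

text \<open>For \<open>0 < \<theta> < pi\<close> this is \<open>sin (\<theta>/2)\<close>.\<close>
definition sector_gap :: "real \<Rightarrow> real" where
  "sector_gap \<theta> = sqrt ((1 - cos \<theta>) / 2)"

lemma sector_gap_pos: "0 < \<theta> \<Longrightarrow> \<theta> < pi \<Longrightarrow> 0 < sector_gap \<theta>"
  unfolding sector_gap_def using cos_monotone_0_pi[of 0 \<theta>] by simp

lemma norm_diff_of_real_ge_outside_sector:
  assumes th: "0 < \<theta>" "\<theta> < pi" and z: "z \<notin> closure (sector \<theta>)" and t: "0 \<le> t"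
  shows "sector_gap \<theta> * (cmod z + t) \<le> cmod (z - complex_of_real t)"
proof -
  have z0: "z \<noteq> 0" using z zero_in_closure_sector[OF th(1)] by auto
  have "z \<notin> sector \<theta>" using z closure_subset by blast
  then have ag: "\<theta> \<le> \<bar>Arg z\<bar>" using z0 by (simp add: sector_def)
  have "\<bar>Arg z\<bar> \<le> pi" using mpi_less_Arg[of z] Arg_le_pi[of z] by auto
  then have "cos \<bar>Arg z\<bar> \<le> cos \<theta>" using ag th by (intro cos_monotone_0_pi_le) auto
  then have "cos (Arg z) \<le> cos \<theta>" by simp
  then have re: "Re z \<le> cmod z * cos \<theta>"
    using cmod_mult_cos_Arg[OF z0] by (metis mult_left_mono norm_ge_zero)
  have sq: "(cmod (z - complex_of_real t))\<^sup>2 = (cmod z)\<^sup>2 - 2 * t * Re z + t\<^sup>2"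
  proof -
    have "(cmod (z - complex_of_real t))\<^sup>2 = (Re z - t)\<^sup>2 + (Im z)\<^sup>2" by (subst cmod_power2) simp
    moreover have "(cmod z)\<^sup>2 = (Re z)\<^sup>2 + (Im z)\<^sup>2" by (rule cmod_power2)
    ultimately show ?thesis by (simp add: power2_eq_square algebra_simps)
  qed
  have "(1 - cos \<theta>) / 2 * (cmod z + t)\<^sup>2 \<le> (cmod z)\<^sup>2 - 2 * t * (cmod z * cos \<theta>) + t\<^sup>2"
  proof -
    have "(cmod z)\<^sup>2 - 2 * t * (cmod z * cos \<theta>) + t\<^sup>2 - (1 - cos \<theta>) / 2 * (cmod z + t)\<^sup>2
          = (1 + cos \<theta>) / 2 * (cmod z - t)\<^sup>2"
      by (simp add: power2_eq_square field_simps)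
    moreover have "0 \<le> (1 + cos \<theta>) / 2 * (cmod z - t)\<^sup>2"
    proof -
      have "0 \<le> 1 + cos \<theta>" using cos_ge_minus_one[of \<theta>] by linarith
      then show ?thesis by (intro mult_nonneg_nonneg) auto
    qed
    ultimately show ?thesis by linarith
  qed
  also have "\<dots> \<le> (cmod (z - complex_of_real t))\<^sup>2"
    unfolding sq using re t by (simp add: mult_left_mono)
  finally have "sqrt ((1 - cos \<theta>) / 2 * (cmod z + t)\<^sup>2) \<le> sqrt ((cmod (z - complex_of_real t))\<^sup>2)"
    by (rule real_sqrt_le_mono)
  moreover have "sqrt ((1 - cos \<theta>) / 2 * (cmod z + t)\<^sup>2) = sector_gap \<theta> * (cmod z + t)"
    unfolding sector_gap_def real_sqrt_mult real_sqrt_abs using t by simp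
  ultimately show ?thesis by simp
qed

lemma cmod_resolvent_coeff_diff_le:
  fixes A B :: real
  assumes z: "z \<noteq> 0" and \<gamma>: "0 < \<gamma>"
    and gap: "\<And>t. 0 \<le> t \<Longrightarrow> \<gamma> * (cmod z + t) \<le> cmod (z - complex_of_real t)"
    and AB: "0 < A" "A \<le> B"
  shows "cmod (z / (z - complex_of_real A) - z / (z - complex_of_real B))
      \<le> 1 / \<gamma>\<^sup>2 * (cmod z / (cmod z + A) - cmod z / (cmod z + B))"
proof -
  define w where "w = cmod z"
  have w: "w > 0" using z by (simp add: w_def)
  have "0 < \<gamma> * (w + A)" "0 < \<gamma> * (w + B)"
    using AB w \<gamma> by (simp_all add: mult_pos_pos add_pos_pos)
  moreover have "\<gamma> * (w + A) \<le> cmod (z - complex_of_real A)" "\<gamma> * (w + B) \<le> cmod (z - complex_of_real B)"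
    using gap[of A] gap[of B] AB by (auto simp: w_def)
  ultimately have gapA: "0 < \<gamma> * (w + A)" "\<gamma> * (w + A) \<le> cmod (z - complex_of_real A)"
    and gapB: "0 < \<gamma> * (w + B)" "\<gamma> * (w + B) \<le> cmod (z - complex_of_real B)"
    by auto
  then have nz: "z - complex_of_real A \<noteq> 0" "z - complex_of_real B \<noteq> 0" by auto
  have "z / (z - complex_of_real A) - z / (z - complex_of_real B) =
        z * complex_of_real (A - B) / ((z - complex_of_real A) * (z - complex_of_real B))"
    using nz by (simp add: field_simps)
  moreover have "cmod (complex_of_real (A - B)) = B - A"
    using AB by (simp only: norm_of_real)
  ultimately have "cmod (z / (z - complex_of_real A) - z / (z - complex_of_real B)) =
        w * (B - A) / (cmod (z - complex_of_real A) * cmod (z - complex_of_real B))"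
    by (simp add: norm_mult norm_divide w_def)
  also have "\<dots> \<le> w * (B - A) / ((\<gamma> * (w + A)) * (\<gamma> * (w + B)))"
  proof (rule divide_left_mono)
    show "(\<gamma> * (w + A)) * (\<gamma> * (w + B)) \<le> cmod (z - complex_of_real A) * cmod (z - complex_of_real B)"
      using gapA gapB by (intro mult_mono) auto
    then show "0 < cmod (z - complex_of_real A) * cmod (z - complex_of_real B) * ((\<gamma> * (w + A)) * (\<gamma> * (w + B)))"
      using gapA gapB by (metis mult_pos_pos order_less_le_trans)
  qed (use AB w in simp)
  also have "\<dots> = 1 / \<gamma>\<^sup>2 * (w / (w + A) - w / (w + B))"
    using AB w \<gamma> by (simp add: field_simps power2_eq_square)
  finally show ?thesis by (simp add: w_def)
qed

lemma cmod_resolvent_coeff_le: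
  fixes A :: real
  assumes z: "z \<noteq> 0" and \<gamma>: "0 < \<gamma>"
    and gap: "\<And>t. 0 \<le> t \<Longrightarrow> \<gamma> * (cmod z + t) \<le> cmod (z - complex_of_real t)"
    and A: "0 \<le> A"
  shows "cmod (z / (z - complex_of_real A)) \<le> 1 / \<gamma>"
proof -
  have pos: "0 < \<gamma> * (cmod z + A)" using z \<gamma> A by (simp add: mult_pos_pos add_pos_nonneg)
  have "cmod (z / (z - complex_of_real A)) = cmod z / cmod (z - complex_of_real A)"
    by (simp add: norm_divide)
  also have "\<dots> \<le> cmod z / (\<gamma> * (cmod z + A))"
    using pos gap[OF A] by (intro divide_left_mono) (auto intro: mult_pos_pos order.strict_trans2)
  also have "\<dots> = (cmod z / (cmod z + A)) / \<gamma>"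
    by simp
  also have "\<dots> \<le> 1 / \<gamma>"
    using \<gamma> A z by (intro divide_right_mono) (simp_all add: add_pos_nonneg)
  finally show ?thesis .
qed

lemma bounded_variation_resolvent_coeffs:
  fixes a :: "nat \<Rightarrow> real"
  assumes a_pos: "\<And>n. 0 < a n" and a_mono: "\<And>n. a n \<le> a (Suc n)"
    and z: "z \<noteq> 0" and \<gamma>: "0 < \<gamma>"
    and gap: "\<And>t. 0 \<le> t \<Longrightarrow> \<gamma> * (cmod z + t) \<le> cmod (z - complex_of_real t)"
  shows "bounded_variation (\<lambda>n. z / (z - complex_of_real (a n))) (1 / \<gamma>\<^sup>2)"
  unfolding bounded_variation_def
proof (intro conjI allI)
  define w where "w = cmod z"
  have w: "w > 0" using z by (simp add: w_def)
  fix N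
  have "(\<Sum>n<N. cmod (z / (z - complex_of_real (a n)) - z / (z - complex_of_real (a (Suc n)))))
      \<le> (\<Sum>n<N. 1 / \<gamma>\<^sup>2 * (w / (w + a n) - w / (w + a (Suc n))))"
    unfolding w_def
    by (intro sum_mono cmod_resolvent_coeff_diff_le[OF z \<gamma> gap]) (use a_pos a_mono in auto)
  also have "\<dots> = 1 / \<gamma>\<^sup>2 * (w / (w + a 0) - w / (w + a N))"
    by (simp only: sum_distrib_left[symmetric] sum_lessThan_telescope'[of "\<lambda>n. w / (w + a n)"])
  also have "\<dots> \<le> 1 / \<gamma>\<^sup>2"
  proof (rule mult_left_le)
    have "w / (w + a 0) \<le> 1" "0 \<le> w / (w + a N)" using w a_pos[of 0] a_pos[of N] by simp_all
    then show "w / (w + a 0) - w / (w + a N) \<le> 1" by linarith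
  qed simp
  finally show "(\<Sum>n<N. cmod (z / (z - complex_of_real (a n)) - z / (z - complex_of_real (a (Suc n)))))
      \<le> 1 / \<gamma>\<^sup>2" .
next
  fix n
  have "\<gamma> \<le> 1" using gap[of 0] z by simp
  then have "1 / \<gamma> \<le> 1 / \<gamma>\<^sup>2"
    using \<gamma> by (simp add: field_simps power2_eq_square mult_left_le_one_le)
  then show "cmod (z / (z - complex_of_real (a n))) \<le> 1 / \<gamma>\<^sup>2"
    using cmod_resolvent_coeff_le[OF z \<gamma> gap, of "a n"] a_pos[of n] by linarith
qed

lemma resolvent_unique:
  assumes "is_resolvent D A z R1" "is_resolvent D A z R2"
  shows "R1 = R2"
proof
  fix x
  have "R2 x \<in> D" and e: "z *\<^sub>C R2 x - A (R2 x) = x" using assms(2) by (auto simp: is_resolvent_def)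
  then have "R1 (z *\<^sub>C R2 x - A (R2 x)) = R2 x" using assms(1) by (auto simp: is_resolvent_def)
  then show "R1 x = R2 x" using e by simp
qed

lemma resolvent_eq: "is_resolvent D A z R \<Longrightarrow> resolvent D A z = R"
  unfolding resolvent_def by (rule the_equality) (auto intro: resolvent_unique)

context R_schauder_decomposition begin

lemma mult_dom_eq:
  assumes "\<And>n. n \<ge> 1 \<Longrightarrow> a' n = a n"
  shows "mult_dom Xs a = {y. convergent (\<lambda>N. cmult_partial (\<lambda>n. complex_of_real (a' n)) N y)}"
proof -
  have "(\<Sum>n=1..N. a n *\<^sub>R p n y) = cmult_partial (\<lambda>n. complex_of_real (a' n)) N y" for N y
    unfolding cmult_partial_def using assms by (intro sum.cong) (auto simp: scaleC_of_real)
  then show ?thesis by (simp add: mult_dom_def)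
qed

lemma cmult_resolvent_coeffs_right_inverse:
  assumes z: "z \<noteq> 0" and nz: "\<And>n. z \<noteq> ar n"
    and bv: "bounded_variation (\<lambda>n. z / (z - ar n)) C"
  shows "(\<lambda>N. cmult_partial ar N (inverse z *\<^sub>C cmult (\<lambda>n. z / (z - ar n)) x))
           \<longlonglongrightarrow> cmult (\<lambda>n. z / (z - ar n)) x - x"
proof -
  define b where "b n = z / (z - ar n)" for n
  have "ar n *\<^sub>C p n (inverse z *\<^sub>C cmult b x) = (b n - 1) *\<^sub>C p n x" if "n \<ge> 1" for n
  proof -
    have "ar n * (inverse z * b n) = b n - 1"
      using nz[of n] z by (simp add: b_def field_simps)
    then show ?thesis
      using bv unfolding b_def[abs_def]
      by (simp add: proj_scaleC proj_of_limit[OF that cmult_partial_tendsto] scaleC_scaleC)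
  qed
  then have "cmult_partial ar N (inverse z *\<^sub>C cmult b x) = cmult_partial b N x - P N x" for N
    unfolding cmult_partial_def sd_partial_def
    by (simp add: scaleC_diff_left sum_subtractf[symmetric] scaleC_one)
  then show ?thesis
    using bv unfolding b_def[abs_def] by (simp add: tendsto_diff cmult_partial_tendsto partial_tendsto)
qed

lemma cmult_resolvent_coeffs_left_inverse:
  assumes nz: "\<And>n. z \<noteq> ar n" and lim: "(\<lambda>N. cmult_partial ar N y) \<longlonglongrightarrow> L"
  shows "cmult (\<lambda>n. z / (z - ar n)) (z *\<^sub>C y - L) = z *\<^sub>C y"
proof -
  have "(z / (z - ar n)) *\<^sub>C p n (z *\<^sub>C y - L) = z *\<^sub>C p n y" if "n \<ge> 1" for n
  proof -
    have "z / (z - ar n) * (z - ar n) = z" using nz[of n] by simp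
    then show ?thesis
      unfolding proj_diff proj_scaleC proj_of_limit[OF that lim]
      by (simp add: scaleC_scaleC scaleC_diff_left[symmetric])
  qed
  then have "cmult_partial (\<lambda>n. z / (z - ar n)) N (z *\<^sub>C y - L) = z *\<^sub>C P N y" for N
    unfolding cmult_partial_def sd_partial_def by (simp add: scaleC_sum_right)
  then show ?thesis
    using tendsto_scaleC[OF tendsto_const partial_tendsto] by (simp add: cmult_def limI)
qed

lemma is_resolvent_cmult:
  fixes a a' :: "nat \<Rightarrow> real"
  assumes aa: "\<And>n. n \<ge> 1 \<Longrightarrow> a' n = a n"
    and z: "z \<noteq> 0" and nz: "\<And>n. z \<noteq> complex_of_real (a' n)"
    and C: "C > 0" and bv: "bounded_variation (\<lambda>n. z / (z - complex_of_real (a' n))) C"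
  shows "is_resolvent (mult_dom Xs a) (mult_op Xs a) z
           (\<lambda>x. inverse z *\<^sub>C cmult (\<lambda>n. z / (z - complex_of_real (a' n))) x)"
proof -
  let ?ar = "\<lambda>n. complex_of_real (a' n)" and ?b = "\<lambda>n. z / (z - complex_of_real (a' n))"
  have A: "mult_op Xs a = cmult ?ar" by (rule mult_op_eq_cmult[OF aa])
  have D: "mult_dom Xs a = {y. convergent (\<lambda>N. cmult_partial ?ar N y)}" by (rule mult_dom_eq[OF aa])
  have right: "(\<lambda>N. cmult_partial ?ar N (inverse z *\<^sub>C cmult ?b x)) \<longlonglongrightarrow> cmult ?b x - x" for x
    by (rule cmult_resolvent_coeffs_right_inverse[OF z nz bv])
  have left: "inverse z *\<^sub>C cmult ?b (z *\<^sub>C y - cmult ?ar y) = y"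
    if "convergent (\<lambda>N. cmult_partial ?ar N y)" for y
  proof -
    have "(\<lambda>N. cmult_partial ?ar N y) \<longlonglongrightarrow> cmult ?ar y"
      using that by (simp add: cmult_def convergent_LIMSEQ_iff)
    then have "cmult ?b (z *\<^sub>C y - cmult ?ar y) = z *\<^sub>C y"
      by (rule cmult_resolvent_coeffs_left_inverse[OF nz])
    then show ?thesis using z by (simp add: scaleC_scaleC scaleC_one)
  qed
  show ?thesis
    unfolding is_resolvent_def A D
  proof (intro conjI allI ballI bop_scaleC bop_cmult[OF C bv])
    show "inverse z *\<^sub>C cmult ?b x \<in> {y. convergent (\<lambda>N. cmult_partial ?ar N y)}" for x
      using right by (auto intro: convergentI)
    show "z *\<^sub>C (inverse z *\<^sub>C cmult ?b x) - cmult ?ar (inverse z *\<^sub>C cmult ?b x) = x" for x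
      using right[of x] z by (simp add: cmult_def limI scaleC_scaleC scaleC_one)
  qed (use left in auto)
qed

lemma scaled_resolvent_mult_op:
  fixes a :: "nat \<Rightarrow> real"
  assumes a_pos: "\<forall>n\<ge>1. 0 < a n" and a_mono: "\<forall>m n. 1 \<le> m \<and> m \<le> n \<longrightarrow> a m \<le> a n"
    and \<theta>: "0 < \<theta>" "\<theta> < pi" and z: "z \<notin> closure (sector \<theta>)"
  defines "b \<equiv> \<lambda>n. z / (z - complex_of_real (a (max n 1)))"
  shows "z \<in> resolvent_set (mult_dom Xs a) (mult_op Xs a)"
    and "(\<lambda>x. z *\<^sub>C resolvent (mult_dom Xs a) (mult_op Xs a) z x) = cmult b"
    and "bounded_variation b (1 / (sector_gap \<theta>)\<^sup>2)"
proof -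
  have z0: "z \<noteq> 0" using z zero_in_closure_sector[OF \<theta>(1)] by auto
  have gap: "\<And>t. 0 \<le> t \<Longrightarrow> sector_gap \<theta> * (cmod z + t) \<le> cmod (z - complex_of_real t)"
    by (rule norm_diff_of_real_ge_outside_sector[OF \<theta> z])
  have pos: "0 < a (max n 1)" and mono: "a (max n 1) \<le> a (max (Suc n) 1)" for n
    using a_pos a_mono by auto
  show bv: "bounded_variation b (1 / (sector_gap \<theta>)\<^sup>2)"
    unfolding b_def
    by (rule bounded_variation_resolvent_coeffs[where a="\<lambda>n. a (max n 1)", OF pos mono z0 sector_gap_pos[OF \<theta>] gap])
  have "z \<noteq> complex_of_real (a (max n 1))" for n
  proof -
    have "0 < sector_gap \<theta> * (cmod z + a (max n 1))"
      using pos[of n] z0 sector_gap_pos[OF \<theta>] by (simp add: add_pos_pos)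
    then show ?thesis using gap[of "a (max n 1)"] pos[of n] by auto
  qed
  then have res: "is_resolvent (mult_dom Xs a) (mult_op Xs a) z (\<lambda>x. inverse z *\<^sub>C cmult b x)"
    unfolding b_def using sector_gap_pos[OF \<theta>] bv[unfolded b_def]
    by (intro is_resolvent_cmult[where C="1 / (sector_gap \<theta>)\<^sup>2"]) (auto simp: max_def z0)
  then show "z \<in> resolvent_set (mult_dom Xs a) (mult_op Xs a)"
    by (auto simp: resolvent_set_def)
  show "(\<lambda>x. z *\<^sub>C resolvent (mult_dom Xs a) (mult_op Xs a) z x) = cmult b"
    using z0 by (simp add: resolvent_eq[OF res] scaleC_scaleC scaleC_one fun_eq_iff)
qed

lemma bounded_scaled_resolvents_mult_op:
  fixes a :: "nat \<Rightarrow> real"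
  assumes a_pos: "\<forall>n\<ge>1. 0 < a n" and a_mono: "\<forall>m n. 1 \<le> m \<and> m \<le> n \<longrightarrow> a m \<le> a n"
    and \<theta>: "0 < \<theta>" "\<theta> < pi"
  defines "F \<equiv> {(\<lambda>x. z *\<^sub>C resolvent (mult_dom Xs a) (mult_op Xs a) z x) | z. z \<notin> closure (sector \<theta>)}"
  shows "op_bounded_set F" and "R_bounded F"
proof -
  define C where "C = 1 / (sector_gap \<theta>)\<^sup>2"
  have C: "C > 0" using sector_gap_pos[OF \<theta>] by (simp add: C_def)
  have cmult: "\<exists>b. bounded_variation b C \<and> T = cmult b" if "T \<in> F" for T
  proof -
    obtain z where "z \<notin> closure (sector \<theta>)"
      and "T = (\<lambda>x. z *\<^sub>C resolvent (mult_dom Xs a) (mult_op Xs a) z x)"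
      using \<open>T \<in> F\<close> by (auto simp: F_def)
    then show ?thesis
      using scaled_resolvent_mult_op(2,3)[OF a_pos a_mono \<theta>, of z] by (auto simp: C_def)
  qed
  show "R_bounded F"
    by (rule R_bounded_cmult_family[OF C cmult])
  show "op_bounded_set F"
    unfolding op_bounded_set_def
  proof (intro exI ballI allI)
    fix T x assume "T \<in> F"
    then obtain b where "bounded_variation b C" "T = cmult b" using cmult by blast
    then show "norm (T x) \<le> 4 * C * partial_R_bound * norm x" using norm_cmult_le[OF C] by simp
  qed
qed

lemma R_sectorial_type0_mult_op:
  fixes a :: "nat \<Rightarrow> real"
  assumes a_pos: "\<forall>n\<ge>1. 0 < a n" and a_mono: "\<forall>m n. 1 \<le> m \<and> m \<le> n \<longrightarrow> a m \<le> a n"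
    and closed_dense: "closed_densely_defined (mult_dom Xs a) (mult_op Xs a)"
  shows "R_sectorial_type0 (mult_dom Xs a) (mult_op Xs a)"
  unfolding R_sectorial_type0_def R_sectorial_type_def sectorial_type_def
proof (intro allI impI conjI closed_dense)
  fix \<omega> :: real assume \<omega>: "0 < \<omega> \<and> \<omega> < pi"
  show "op_spectrum (mult_dom Xs a) (mult_op Xs a) \<subseteq> closure (sector \<omega>)"
  proof
    fix z assume z: "z \<in> op_spectrum (mult_dom Xs a) (mult_op Xs a)"
    show "z \<in> closure (sector \<omega>)"
    proof (rule ccontr)
      assume "z \<notin> closure (sector \<omega>)"
      then have "z \<in> resolvent_set (mult_dom Xs a) (mult_op Xs a)"
        using scaled_resolvent_mult_op(1)[OF a_pos a_mono] \<omega> by blast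
      then show False using z by (simp add: op_spectrum_def)
    qed
  qed
  fix \<theta> :: real assume "\<omega> < \<theta> \<and> \<theta> < pi"
  then have \<theta>: "0 < \<theta>" "\<theta> < pi" using \<omega> by auto
  show "op_bounded_set {(\<lambda>x. z *\<^sub>C resolvent (mult_dom Xs a) (mult_op Xs a) z x) | z. z \<notin> closure (sector \<theta>)}"
    "R_bounded {(\<lambda>x. z *\<^sub>C resolvent (mult_dom Xs a) (mult_op Xs a) z x) | z. z \<notin> closure (sector \<theta>)}"
    by (rule bounded_scaled_resolvents_mult_op[OF a_pos a_mono \<theta>])+
qed

end

theorem lemma2:
  fixes Xs :: "nat \<Rightarrow> 'a::complex_banach set"
  assumes RS: "R_schauder_decomp Xs"
  shows "(\<forall>a :: nat \<Rightarrow> real.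
            (\<forall>n\<ge>1. 0 < a n) \<and> (\<forall>m n. 1 \<le> m \<and> m \<le> n \<longrightarrow> a m \<le> a n) \<and>
            (\<exists>\<omega>. 0 < \<omega> \<and> \<omega> < pi \<and> sectorial_type (mult_dom Xs a) (mult_op Xs a) \<omega>)
            \<longrightarrow> R_sectorial_type0 (mult_dom Xs a) (mult_op Xs a))
       \<and> (\<forall>c :: nat \<Rightarrow> real.
            (\<forall>n\<ge>1. 0 < c n \<and> c n < 1) \<and> (\<forall>m n. 1 \<le> m \<and> m \<le> n \<longrightarrow> c m \<le> c n) \<and>
            Ritt (mult_op Xs c)
            \<longrightarrow> R_Ritt (mult_op Xs c))"
proof -
  interpret R_schauder_decomposition Xs by (rule R_schauder_decomposition.intro[OF RS])
  show ?thesis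
  proof (intro conjI allI impI)
    fix a :: "nat \<Rightarrow> real"
    assume "(\<forall>n\<ge>1. 0 < a n) \<and> (\<forall>m n. 1 \<le> m \<and> m \<le> n \<longrightarrow> a m \<le> a n) \<and>
            (\<exists>\<omega>. 0 < \<omega> \<and> \<omega> < pi \<and> sectorial_type (mult_dom Xs a) (mult_op Xs a) \<omega>)"
    then show "R_sectorial_type0 (mult_dom Xs a) (mult_op Xs a)"
      unfolding sectorial_type_def by (blast intro: R_sectorial_type0_mult_op)
  next
    fix c :: "nat \<Rightarrow> real"
    assume "(\<forall>n\<ge>1. 0 < c n \<and> c n < 1) \<and> (\<forall>m n. 1 \<le> m \<and> m \<le> n \<longrightarrow> c m \<le> c n) \<and>
            Ritt (mult_op Xs c)"
    then show "R_Ritt (mult_op Xs c)"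
      by (blast intro: R_Ritt_mult_op)
  qed
qed

end
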